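(* Let $\{f_\theta:\theta\in\Theta\}$ be a parametric family of densities on a space $\mathcal{X}$, each with respect to a common base measure $\nu_{\mathcal{X}}$, and let $\pi$ be a positive prior density on $\Theta$ with respect to a base measure $\nu_\Theta$. Suppose that for every $\theta\in\Theta$ the support of $f_\theta$ is contained in the support of $\bar f_\pi$. Fix integers $B\ge1$, $M\ge1$, and let $\widetilde Q^M_\pi(\cdot\mid x,\theta_{1:B})$ be a conditional distribution on $\mathcal X^M$ satisfying: for any $\theta_1,\dots,\theta_B\in\Theta$, if $X\sim g_\pi(\cdot\mid\theta_{1:B})$ and $(\widetilde X^{(1)},\dots,\widetilde X^{(M)})\mid X\sim\widetilde Q^M_\pi(\cdot\mid X,\theta_{1:B})$, then $(X,\widetilde X^{(1)},\dots,\widetilde X^{(M)})$ is exchangeable. Suppose $X\sim f_{\theta_0}$ for some $\theta_0\in\Theta$; given $X$, draw $\widehat\theta_1,\dots,\widehat\theta_B$ i.i.d. from the posterior $\pi(\cdot\mid X)$; given $(X,\widehat\theta_{1:B})$, draw $(\widetilde X^{(1)},\dots,\widetilde X^{(M)})\sim\widetilde Q^M_\pi(\cdot\mid X,\widehat\theta_{1:B})$. Then $$\mathrm{d}_{\mathrm{exch}}\big(X,\widetilde X^{(1)},\dots,\widetilde X^{(M)}\big)\le \inf_{\pi_0}\Big\{\epsilon(\pi_0)+\frac{\Delta(\pi_0)}{2\sqrt B}\Big\},$$ where the infimum is over all densities $\pi_0$ on $\Theta$ with respect to $\nu_\Theta$ such that the support of $\bar f_{\pi_0}$ contains the support of $f_\theta$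 for every $\theta\in\Theta$.
   Context: For a prior density $\rho$ on $\Theta$ (w.r.t. $\nu_\Theta$), the marginal likelihood is $\bar f_\rho(x)=\int_\Theta \rho(\theta)f_\theta(x)\,d\nu_\Theta(\theta)$ and the posterior density (w.r.t. $\nu_\Theta$) is $\rho(\theta\mid x)=\rho(\theta)f_\theta(x)/\bar f_\rho(x)$. For $\theta_1,\dots,\theta_B\in\Theta$, $g_\pi(\cdot\mid\theta_{1:B})$ is the probability density on $\mathcal{X}$ (w.r.t. $\nu_{\mathcal X}$) proportional to $x\mapsto \prod_{b=1}^B f_{\theta_b}(x)/\bar f_\pi(x)^{B-1}$. For a prior density $\pi_0$: $\epsilon(\pi_0)=\mathrm{d}_{\mathrm{TV}}(f_{\theta_0},\bar f_{\pi_0})$, and $\Delta(\pi_0)=\mathbb{E}_{X\sim f_{\theta_0}}\big[\mathrm{d}_{\chi^2}(\pi_0(\cdot\mid X)\,\|\,\pi(\cdot\mid X))^{1/2}\big]$, where $\mathrm{d}_{\chi^2}(Q\|P)=\int (dQ/dP-1)^2\,dP$. For a random vector $(Z_0,\dots,Z_M)$, $\mathrm{d}_{\mathrm{exch}}(Z_0,\dots,Z_M)$ is the infimum of the total variation distance between its law and the law of any exchangeable random vector $(Z_0',\dots,Z_M')$. *)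

theory Defs
  imports "HOL-Probability.Probability"
begin

definition fbar :: "'t measure \<Rightarrow> ('t \<Rightarrow> 'x \<Rightarrow> real) \<Rightarrow> ('t \<Rightarrow> real) \<Rightarrow> 'x \<Rightarrow> real" where
  "fbar MT f rho x = enn2real (\<integral>\<^sup>+ \<theta>. ennreal (rho \<theta> * f \<theta> x) \<partial>MT)"

definition post_dens :: "'t measure \<Rightarrow> ('t \<Rightarrow> 'x \<Rightarrow> real) \<Rightarrow> ('t \<Rightarrow> real) \<Rightarrow> 'x \<Rightarrow> 't \<Rightarrow> real" where
  "post_dens MT f rho x \<theta> = rho \<theta> * f \<theta> x / fbar MT f rho x"

text \<open>Unnormalised density of g_pi(. | theta_{1:B}), theta indexed by {1..B}.\<close>
definition g_unnorm :: "'t measure \<Rightarrow> ('t \<Rightarrow> 'x \<Rightarrow> real) \<Rightarrow> ('t \<Rightarrow> real) \<Rightarrow> nat \<Rightarrow> (nat \<Rightarrow> 't) \<Rightarrow> 'x \<Rightarrow> real" where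
  "g_unnorm MT f pr B ts x = (\<Prod>b\<in>{1..B}. f (ts b) x) / fbar MT f pr x ^ (B - 1)"

definition g_const :: "'x measure \<Rightarrow> 't measure \<Rightarrow> ('t \<Rightarrow> 'x \<Rightarrow> real) \<Rightarrow> ('t \<Rightarrow> real) \<Rightarrow> nat \<Rightarrow> (nat \<Rightarrow> 't) \<Rightarrow> ennreal" where
  "g_const MX MT f pr B ts = (\<integral>\<^sup>+ x. ennreal (g_unnorm MT f pr B ts x) \<partial>MX)"

text \<open>The probability density g_pi(. | theta_{1:B}) (meaningful when 0 < g_const < infinity).\<close>
definition g_dens :: "'x measure \<Rightarrow> 't measure \<Rightarrow> ('t \<Rightarrow> 'x \<Rightarrow> real) \<Rightarrow> ('t \<Rightarrow> real) \<Rightarrow> nat \<Rightarrow> (nat \<Rightarrow> 't) \<Rightarrow> 'x \<Rightarrow> real" where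
  "g_dens MX MT f pr B ts x = g_unnorm MT f pr B ts x / enn2real (g_const MX MT f pr B ts)"

text \<open>Joint law of (X, Xtilde^(1..M)) indexed by {0..M} (index 0 is X),
  where X ~ P and Xtilde | X ~ K X.\<close>
definition joint_law :: "'x measure \<Rightarrow> nat \<Rightarrow> 'x measure \<Rightarrow> ('x \<Rightarrow> (nat \<Rightarrow> 'x) measure) \<Rightarrow> (nat \<Rightarrow> 'x) measure" where
  "joint_law MX M P K = P \<bind> (\<lambda>x. K x \<bind> (\<lambda>y. return (PiM {0..M} (\<lambda>_. MX)) (y(0 := x))))"

definition exchangeable :: "nat set \<Rightarrow> (nat \<Rightarrow> 'x) measure \<Rightarrow> bool" where
  "exchangeable I E \<longleftrightarrow> (\<forall>p. p permutes I \<longrightarrow> distr E E (\<lambda>z. z \<circ> p) = E)"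

definition dTV :: "'a measure \<Rightarrow> 'a measure \<Rightarrow> real" where
  "dTV P Q = (SUP A\<in>sets P. \<bar>measure P A - measure Q A\<bar>)"

definition d_exch :: "'x measure \<Rightarrow> nat \<Rightarrow> (nat \<Rightarrow> 'x) measure \<Rightarrow> real" where
  "d_exch MX M L = (INF E\<in>{E. prob_space E \<and> sets E = sets (PiM {0..M} (\<lambda>_. MX))
                               \<and> exchangeable {0..M} E}. dTV L E)"

definition dchi2 :: "'t measure \<Rightarrow> ('t \<Rightarrow> real) \<Rightarrow> ('t \<Rightarrow> real) \<Rightarrow> ennreal" where
  "dchi2 MT q p = (if AE \<theta> in MT. p \<theta> = 0 \<longrightarrow> q \<theta> = 0
                   then \<integral>\<^sup>+ \<theta>. ennreal ((q \<theta> / p \<theta> - 1)\<^sup>2 * p \<theta>) \<partial>MT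
                   else \<infinity>)"

definition esqrt :: "ennreal \<Rightarrow> ennreal" where
  "esqrt e = (if e = \<infinity> then \<infinity> else ennreal (sqrt (enn2real e)))"

definition eps_err :: "'x measure \<Rightarrow> 't measure \<Rightarrow> ('t \<Rightarrow> 'x \<Rightarrow> real) \<Rightarrow> 't \<Rightarrow> ('t \<Rightarrow> real) \<Rightarrow> real" where
  "eps_err MX MT f \<theta>0 pi0 = dTV (density MX (f \<theta>0)) (density MX (fbar MT f pi0))"

definition Delta_err :: "'x measure \<Rightarrow> 't measure \<Rightarrow> ('t \<Rightarrow> 'x \<Rightarrow> real) \<Rightarrow> ('t \<Rightarrow> real) \<Rightarrow> 't \<Rightarrow> ('t \<Rightarrow> real) \<Rightarrow> ennreal" where
  "Delta_err MX MT f pr \<theta>0 pi0 =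
     (\<integral>\<^sup>+ x. esqrt (dchi2 MT (post_dens MT f pi0 x) (post_dens MT f pr x)) \<partial>density MX (f \<theta>0))"

definition is_density :: "'t measure \<Rightarrow> ('t \<Rightarrow> real) \<Rightarrow> bool" where
  "is_density MT rho \<longleftrightarrow> rho \<in> borel_measurable MT \<and> (\<forall>\<theta>\<in>space MT. 0 \<le> rho \<theta>)
      \<and> (\<integral>\<^sup>+ \<theta>. ennreal (rho \<theta>) \<partial>MT) = 1"

definition supp_cover :: "'x measure \<Rightarrow> 't measure \<Rightarrow> ('t \<Rightarrow> 'x \<Rightarrow> real) \<Rightarrow> ('t \<Rightarrow> real) \<Rightarrow> bool" where
  "supp_cover MX MT f rho \<longleftrightarrow>
     (\<forall>\<theta>\<in>space MT. AE x in MX. f \<theta> x > 0 \<longrightarrow> fbar MT f rho x > 0)"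

end

theory Submission
  imports Defs
begin

text \<open>Fix a competing prior \<open>pi0\<close> and let \<open>w = pi0 / pi\<close>. Reweighting the posterior draws
  \<open>\<theta>\<^sub>1, ..., \<theta>\<^sub>B\<close> by the average of the \<open>w(\<theta>\<^sub>b)\<close> turns the scheme into a mixture, over the
  draws, of the laws in which \<open>X\<close> has density \<open>g_pi(. | \<theta>\<^sub>1, ..., \<theta>\<^sub>B)\<close>; the mixing weights
  have total mass one because \<open>\<integral> pi(\<theta>) f\<^sub>\<theta>(x) w(\<theta>) d\<theta> = fbar_pi0(x)\<close>. By the hypothesis on
  \<open>Q\<close> this mixture \<open>E\<close> is exchangeable. The law of the theorem and \<open>E\<close> differ only in the
  density of \<open>(X, \<theta>\<^sub>1, ..., \<theta>\<^sub>B)\<close>, namely \<open>f\<^sub>\<theta>\<^sub>0(x) \<Prod>\<^sub>b pi(\<theta>\<^sub>b | x)\<close> against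
  \<open>fbar_pi(x) \<Prod>\<^sub>b pi(\<theta>\<^sub>b | x)\<close> times the average of the \<open>w(\<theta>\<^sub>b)\<close>, so their total variation
  distance is at most half the \<open>L\<^sup>1\<close> distance of these densities. That distance is at most
  \<open>\<integral> |f\<^sub>\<theta>\<^sub>0 - fbar_pi0| = 2 \<epsilon>(pi0)\<close> plus \<open>f\<^sub>\<theta>\<^sub>0(x)\<close> times the posterior mean absolute deviation
  from \<open>1\<close> of an average of \<open>B\<close> i.i.d. variables of mean \<open>1\<close> and variance
  \<open>d_chi2(pi0(. | x) || pi(. | x))\<close>, which Cauchy-Schwarz bounds by \<open>sqrt (d_chi2 / B)\<close>.\<close>

section \<open>Sums over independent coordinates\<close>

lemma prod_if_eq_card:
  fixes X Y :: "'b::comm_monoid_mult"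
  assumes "finite I" "b \<in> I"
  shows "(\<Prod>c\<in>I. if c = b then X else Y) = X * Y ^ (card I - 1)"
  using prod.remove[OF assms, of "\<lambda>c. if c = b then X else Y"] assms
  by (simp add: card_Diff_singleton)

lemma PiM_density:
  fixes N :: "'a measure" and g :: "'a \<Rightarrow> ennreal" and I :: "'i set"
  assumes sf: "sigma_finite_measure N" and I: "finite I"
    and g[measurable]: "g \<in> borel_measurable N" and fin: "(\<integral>\<^sup>+x. g x \<partial>N) < \<infinity>"
  shows "PiM I (\<lambda>_. density N g) = density (PiM I (\<lambda>_. N)) (\<lambda>x. \<Prod>i\<in>I. g (x i))"
proof -
  interpret D: finite_measure "density N g"
    using fin by (intro finite_measureI) (auto simp: emeasure_density cong: nn_integral_cong_simp split: split_indicator)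
  interpret PD: product_sigma_finite "\<lambda>_. density N g"
    unfolding product_sigma_finite_def using D.sigma_finite_measure_axioms by simp
  interpret PN: product_sigma_finite "\<lambda>_. N"
    unfolding product_sigma_finite_def using sf by simp
  show ?thesis
  proof (rule PD.PiM_eqI[OF I, symmetric])
    show "sets (density (Pi\<^sub>M I (\<lambda>_. N)) (\<lambda>x. \<Prod>i\<in>I. g (x i))) = sets (Pi\<^sub>M I (\<lambda>_. density N g))"
      by (simp cong: sets_PiM_cong)
    fix A assume "\<And>i. i \<in> I \<Longrightarrow> A i \<in> sets (density N g)"
    then have A: "\<And>i. i \<in> I \<Longrightarrow> A i \<in> sets N" by simp
    have "Pi\<^sub>E I A \<in> sets (Pi\<^sub>M I (\<lambda>_. N))"
      using A I by (intro sets_PiM_I_finite) auto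
    then have "emeasure (density (Pi\<^sub>M I (\<lambda>_. N)) (\<lambda>x. \<Prod>i\<in>I. g (x i))) (Pi\<^sub>E I A)
        = (\<integral>\<^sup>+x. (\<Prod>i\<in>I. g (x i)) * indicator (Pi\<^sub>E I A) x \<partial>Pi\<^sub>M I (\<lambda>_. N))"
      by (subst emeasure_density) auto
    also have "\<dots> = (\<integral>\<^sup>+x. (\<Prod>i\<in>I. g (x i) * indicator (A i) (x i)) \<partial>Pi\<^sub>M I (\<lambda>_. N))"
      by (intro nn_integral_cong) (auto simp: indicator_def prod.distrib space_PiM PiE_iff I)
    also have "\<dots> = (\<Prod>i\<in>I. \<integral>\<^sup>+y. g y * indicator (A i) y \<partial>N)"
      using A by (intro PN.product_nn_integral_prod I) auto
    also have "\<dots> = (\<Prod>i\<in>I. emeasure (density N g) (A i))"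
      using A by (intro prod.cong refl) (simp add: emeasure_density)
    finally show "emeasure (density (Pi\<^sub>M I (\<lambda>_. N)) (\<lambda>x. \<Prod>i\<in>I. g (x i))) (Pi\<^sub>E I A)
        = (\<Prod>i\<in>I. emeasure (density N g) (A i))" .
  qed
qed

lemma nn_integral_PiM_prod_mult_sum:
  fixes N :: "'a measure" and a w :: "'a \<Rightarrow> ennreal" and I :: "'i set"
  assumes sf: "sigma_finite_measure N" and I: "finite I"
    and a[measurable]: "a \<in> borel_measurable N" and w[measurable]: "w \<in> borel_measurable N"
  shows "(\<integral>\<^sup>+ts. (\<Prod>c\<in>I. a (ts c)) * (\<Sum>b\<in>I. w (ts b)) \<partial>PiM I (\<lambda>_. N))
       = of_nat (card I) * ((\<integral>\<^sup>+y. a y * w y \<partial>N) * (\<integral>\<^sup>+y. a y \<partial>N) ^ (card I - 1))"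
proof -
  interpret PN: product_sigma_finite "\<lambda>_. N"
    unfolding product_sigma_finite_def using sf by simp
  define F :: "'i \<Rightarrow> 'i \<Rightarrow> 'a \<Rightarrow> ennreal" where "F b c = (if c = b then (\<lambda>y. a y * w y) else a)" for b c
  have [measurable]: "F b c \<in> borel_measurable N" for b c
    by (simp add: F_def)
  have expand: "(\<Prod>c\<in>I. a (ts c)) * (\<Sum>b\<in>I. w (ts b)) = (\<Sum>b\<in>I. \<Prod>c\<in>I. F b c (ts c))" for ts
  proof -
    have "(\<Prod>c\<in>I. F b c (ts c)) = (\<Prod>c\<in>I. a (ts c)) * w (ts b)" if "b \<in> I" for b
    proof -
      have "(\<Prod>c\<in>I. F b c (ts c)) = (\<Prod>c\<in>I. a (ts c) * (if c = b then w (ts c) else 1))"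
        by (intro prod.cong) (auto simp: F_def)
      then show ?thesis
        using that I by (simp add: prod.distrib prod.delta)
    qed
    then show ?thesis
      by (simp add: sum_distrib_left)
  qed
  have "(\<integral>\<^sup>+ts. (\<Prod>c\<in>I. a (ts c)) * (\<Sum>b\<in>I. w (ts b)) \<partial>PiM I (\<lambda>_. N))
      = (\<Sum>b\<in>I. \<integral>\<^sup>+ts. (\<Prod>c\<in>I. F b c (ts c)) \<partial>PiM I (\<lambda>_. N))"
    unfolding expand by (intro nn_integral_sum) measurable
  also have "\<dots> = (\<Sum>b\<in>I. \<Prod>c\<in>I. integral\<^sup>N N (F b c))"
    by (intro sum.cong refl PN.product_nn_integral_prod I) auto
  also have "\<dots> = (\<Sum>b\<in>I. (\<integral>\<^sup>+y. a y * w y \<partial>N) * (\<integral>\<^sup>+y. a y \<partial>N) ^ (card I - 1))"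
    using I by (intro sum.cong refl) (simp add: F_def if_distrib prod_if_eq_card)
  finally show ?thesis
    by simp
qed

lemma integral_PiM_component_mult:
  fixes D :: "'a measure" and u :: "'a \<Rightarrow> real" and I :: "'i set"
  assumes D: "prob_space D" and I: "finite I" and b: "b \<in> I" and c: "c \<in> I"
    and u[measurable]: "u \<in> borel_measurable D"
    and u2: "integrable D (\<lambda>t. (u t)\<^sup>2)" and u0: "(\<integral>t. u t \<partial>D) = 0"
  shows "integrable (PiM I (\<lambda>_. D)) (\<lambda>ts. u (ts b) * u (ts c))"
    and "(\<integral>ts. u (ts b) * u (ts c) \<partial>PiM I (\<lambda>_. D)) = (if b = c then (\<integral>t. (u t)\<^sup>2 \<partial>D) else 0)"
proof -
  interpret D: prob_space D by fact
  interpret P: product_prob_space "\<lambda>_. D" I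
    by unfold_locales
  define F where "F i = (\<lambda>t. (if i = b then u t else 1) * (if i = c then u t else 1))" for i
  have prod_F: "(\<Prod>i\<in>I. F i (ts i)) = u (ts b) * u (ts c)" for ts
    using b c I by (simp add: F_def prod.distrib prod.delta)
  have F_int: "integrable D (F i)" for i
    using D.square_integrable_imp_integrable[OF u u2] u2
    by (cases "i = b"; cases "i = c") (simp_all add: F_def power2_eq_square)
  have "integrable (PiM I (\<lambda>_. D)) (\<lambda>ts. \<Prod>i\<in>I. F i (ts i))"
    by (rule P.product_integrable_prod[OF I F_int])
  then show "integrable (PiM I (\<lambda>_. D)) (\<lambda>ts. u (ts b) * u (ts c))"
    by (simp only: prod_F)
  have "(\<integral>ts. u (ts b) * u (ts c) \<partial>PiM I (\<lambda>_. D)) = (\<Prod>i\<in>I. integral\<^sup>L D (F i))"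
    unfolding prod_F[symmetric] by (rule P.product_integral_prod[OF I F_int])
  also have "\<dots> = (\<Prod>i\<in>I. if i = b \<or> i = c then integral\<^sup>L D (F i) else 1)"
    by (intro prod.cong refl) (auto simp: F_def D.prob_space)
  also have "\<dots> = (if b = c then (\<integral>t. (u t)\<^sup>2 \<partial>D) else 0)"
  proof (cases "b = c")
    case True
    then show ?thesis
      using b I by (simp add: prod.delta F_def power2_eq_square)
  next
    case False
    then have "integral\<^sup>L D (F b) = 0"
      using u0 by (simp add: F_def)
    then show ?thesis
      using False b I by (simp add: prod_zero bexI[of _ b])
  qed
  finally show "(\<integral>ts. u (ts b) * u (ts c) \<partial>PiM I (\<lambda>_. D)) = (if b = c then (\<integral>t. (u t)\<^sup>2 \<partial>D) else 0)" .
qed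

lemma integral_PiM_sum_components_square:
  fixes D :: "'a measure" and u :: "'a \<Rightarrow> real" and I :: "'i set"
  assumes D: "prob_space D" and I: "finite I"
    and u[measurable]: "u \<in> borel_measurable D"
    and u2: "integrable D (\<lambda>t. (u t)\<^sup>2)" and u0: "(\<integral>t. u t \<partial>D) = 0"
  shows "integrable (PiM I (\<lambda>_. D)) (\<lambda>ts. (\<Sum>b\<in>I. u (ts b))\<^sup>2)"
    and "(\<integral>ts. (\<Sum>b\<in>I. u (ts b))\<^sup>2 \<partial>PiM I (\<lambda>_. D)) = card I * (\<integral>t. (u t)\<^sup>2 \<partial>D)"
proof -
  note cross = integral_PiM_component_mult[OF D I _ _ u u2 u0]
  have square: "(\<Sum>b\<in>I. u (ts b))\<^sup>2 = (\<Sum>b\<in>I. \<Sum>c\<in>I. u (ts b) * u (ts c))" for ts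
    by (simp add: power2_eq_square sum_product)
  show "integrable (PiM I (\<lambda>_. D)) (\<lambda>ts. (\<Sum>b\<in>I. u (ts b))\<^sup>2)"
    unfolding square using cross(1) by (intro Bochner_Integration.integrable_sum) blast
  have "(\<integral>ts. (\<Sum>b\<in>I. u (ts b))\<^sup>2 \<partial>PiM I (\<lambda>_. D))
      = (\<Sum>b\<in>I. \<Sum>c\<in>I. \<integral>ts. u (ts b) * u (ts c) \<partial>PiM I (\<lambda>_. D))"
    unfolding square using cross(1) by (simp add: integral_sum integrable_sum)
  also have "\<dots> = (\<Sum>b\<in>I. \<Sum>c\<in>I. if b = c then (\<integral>t. (u t)\<^sup>2 \<partial>D) else 0)"
    using cross(2) by (intro sum.cong refl) auto
  finally show "(\<integral>ts. (\<Sum>b\<in>I. u (ts b))\<^sup>2 \<partial>PiM I (\<lambda>_. D)) = card I * (\<integral>t. (u t)\<^sup>2 \<partial>D)"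
    using I by (simp add: sum.delta)
qed

lemma ennreal_le_sqrt_of_power2_le:
  fixes x :: ennreal and c :: real
  assumes "x ^ 2 \<le> ennreal c" "0 \<le> c"
  shows "x \<le> ennreal (sqrt c)"
proof (cases x)
  case (real r)
  then have "r ^ 2 \<le> c"
    using assms by (simp add: ennreal_power ennreal_le_iff)
  then show ?thesis
    using real by (simp add: real_le_rsqrt ennreal_leI)
next
  case top
  then show ?thesis
    using assms by (metis ennreal_neq_top top_unique power_eq_top_ennreal zero_neq_numeral)
qed

lemma nn_integral_abs_sum_components_le:
  fixes D :: "'a measure" and u :: "'a \<Rightarrow> real" and I :: "'i set"
  assumes D: "prob_space D" and I: "finite I"
    and u[measurable]: "u \<in> borel_measurable D"
    and u2: "integrable D (\<lambda>t. (u t)\<^sup>2)" and u0: "(\<integral>t. u t \<partial>D) = 0"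
  shows "(\<integral>\<^sup>+ts. ennreal \<bar>\<Sum>b\<in>I. u (ts b)\<bar> \<partial>PiM I (\<lambda>_. D))
       \<le> ennreal (sqrt (card I * (\<integral>t. (u t)\<^sup>2 \<partial>D)))"
proof (rule ennreal_le_sqrt_of_power2_le)
  interpret D: prob_space D by fact
  interpret P: product_prob_space "\<lambda>_. D" I
    by unfold_locales
  note Z2 = integral_PiM_sum_components_square[OF D I u u2 u0]
  have "(\<integral>\<^sup>+ts. ennreal \<bar>\<Sum>b\<in>I. u (ts b)\<bar> * 1 \<partial>PiM I (\<lambda>_. D)) ^ 2
      \<le> (\<integral>\<^sup>+ts. (ennreal \<bar>\<Sum>b\<in>I. u (ts b)\<bar>) ^ 2 \<partial>PiM I (\<lambda>_. D)) * (\<integral>\<^sup>+ts. 1 ^ 2 \<partial>PiM I (\<lambda>_. D))"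
    by (rule Cauchy_Schwarz_nn_integral) auto
  also have "\<dots> = (\<integral>\<^sup>+ts. ennreal ((\<Sum>b\<in>I. u (ts b))\<^sup>2) \<partial>PiM I (\<lambda>_. D))"
    by (simp add: P.emeasure_space_1 ennreal_power)
  also have "\<dots> = ennreal (card I * (\<integral>t. (u t)\<^sup>2 \<partial>D))"
    using Z2 by (subst nn_integral_eq_integral) auto
  finally show "(\<integral>\<^sup>+ts. ennreal \<bar>\<Sum>b\<in>I. u (ts b)\<bar> \<partial>PiM I (\<lambda>_. D)) ^ 2
      \<le> ennreal (card I * (\<integral>t. (u t)\<^sup>2 \<partial>D))"
    by simp
  show "0 \<le> card I * (\<integral>t. (u t)\<^sup>2 \<partial>D)"
    by simp
qed

section \<open>Total variation\<close>

lemma dTV_upper: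
  assumes P: "finite_measure P" and Q: "prob_space Q" and A: "A \<in> sets P"
  shows "\<bar>measure P A - measure Q A\<bar> \<le> dTV P Q"
proof -
  interpret P: finite_measure P by fact
  interpret Q: prob_space Q by fact
  have "\<bar>measure P A - measure Q A\<bar> \<le> measure P (space P) + 1" for A
    using P.bounded_measure[of A] Q.prob_le_1[of A] measure_nonneg[of P A] measure_nonneg[of Q A]
    by linarith
  then have "bdd_above ((\<lambda>A. \<bar>measure P A - measure Q A\<bar>) ` sets P)"
    by (intro bdd_aboveI2)
  then show ?thesis
    unfolding dTV_def using A by (rule cSUP_upper2) simp
qed

lemma dTV_nonneg:
  assumes "finite_measure P" and "prob_space Q"
  shows "0 \<le> dTV P Q"
  using dTV_upper[OF assms sets.empty_sets] by simp

lemma dTV_least: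
  assumes "\<And>A. A \<in> sets P \<Longrightarrow> \<bar>measure P A - measure Q A\<bar> \<le> c"
  shows "dTV P Q \<le> c"
  unfolding dTV_def using assms by (intro cSUP_least) auto

lemma ennreal_pos_part_swap:
  fixes a b :: real
  assumes "0 \<le> a" "0 \<le> b"
  shows "ennreal a + ennreal (b - a) = ennreal b + ennreal (a - b)"
  using assms by (cases "a \<le> b") (simp_all add: ennreal_plus[symmetric] ennreal_neg del: ennreal_plus)

lemma ennreal_abs_diff_eq_pos_parts:
  fixes a b :: real
  shows "ennreal \<bar>a - b\<bar> = ennreal (a - b) + ennreal (b - a)"
  by (cases "a \<le> b") (simp_all add: ennreal_neg)

lemma nn_integral_pos_part_swap:
  fixes a b :: "'a \<Rightarrow> real"
  assumes [measurable]: "a \<in> borel_measurable N" "b \<in> borel_measurable N"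
    and nonneg: "\<And>x. x \<in> space N \<Longrightarrow> 0 \<le> a x" "\<And>x. x \<in> space N \<Longrightarrow> 0 \<le> b x"
    and eq: "(\<integral>\<^sup>+x. ennreal (a x) \<partial>N) = (\<integral>\<^sup>+x. ennreal (b x) \<partial>N)"
    and fin: "(\<integral>\<^sup>+x. ennreal (b x) \<partial>N) \<noteq> \<infinity>"
  shows "(\<integral>\<^sup>+x. ennreal (b x - a x) \<partial>N) = (\<integral>\<^sup>+x. ennreal (a x - b x) \<partial>N)"
proof -
  have "(\<integral>\<^sup>+x. ennreal (a x) \<partial>N) + (\<integral>\<^sup>+x. ennreal (b x - a x) \<partial>N)
      = (\<integral>\<^sup>+x. ennreal (a x) + ennreal (b x - a x) \<partial>N)"
    by (rule nn_integral_add[symmetric]) auto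
  also have "\<dots> = (\<integral>\<^sup>+x. ennreal (b x) + ennreal (a x - b x) \<partial>N)"
    using nonneg by (intro nn_integral_cong ennreal_pos_part_swap) auto
  also have "\<dots> = (\<integral>\<^sup>+x. ennreal (b x) \<partial>N) + (\<integral>\<^sup>+x. ennreal (a x - b x) \<partial>N)"
    by (rule nn_integral_add) auto
  finally show ?thesis
    using eq fin by (simp add: ennreal_add_left_cancel)
qed

lemma prob_space_density_real:
  assumes "a \<in> borel_measurable N" and "(\<integral>\<^sup>+x. ennreal (a x) \<partial>N) = 1"
  shows "prob_space (density N a)"
  using assms by (intro prob_spaceI) (auto simp: emeasure_density intro: trans[OF nn_integral_cong])

text \<open>Scheffe's identity, as an inequality: the \<open>L\<^sup>1\<close> distance of two probability densities is
  twice the positive part of their difference, which is the mass difference on \<open>{b < a}\<close>.\<close>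

lemma nn_integral_abs_diff_le_dTV:
  fixes a b :: "'a \<Rightarrow> real"
  assumes [measurable]: "a \<in> borel_measurable N" "b \<in> borel_measurable N"
    and nonneg: "\<And>x. x \<in> space N \<Longrightarrow> 0 \<le> a x" "\<And>x. x \<in> space N \<Longrightarrow> 0 \<le> b x"
    and a1: "(\<integral>\<^sup>+x. ennreal (a x) \<partial>N) = 1" and b1: "(\<integral>\<^sup>+x. ennreal (b x) \<partial>N) = 1"
  shows "(\<integral>\<^sup>+x. ennreal \<bar>a x - b x\<bar> \<partial>N) \<le> 2 * ennreal (dTV (density N a) (density N b))"
proof -
  define S where "S = {x\<in>space N. b x < a x}"
  have S[measurable]: "S \<in> sets N"
    unfolding S_def by measurable
  define \<gamma> where "\<gamma> = (\<integral>\<^sup>+x. ennreal (a x - b x) \<partial>N)"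
  have "(\<integral>\<^sup>+x. ennreal \<bar>a x - b x\<bar> \<partial>N) = \<gamma> + (\<integral>\<^sup>+x. ennreal (b x - a x) \<partial>N)"
    unfolding \<gamma>_def ennreal_abs_diff_eq_pos_parts by (rule nn_integral_add) auto
  also have "\<dots> = 2 * \<gamma>"
    using nn_integral_pos_part_swap[of a N b] nonneg a1 b1 by (simp add: \<gamma>_def mult_2)
  finally have abs_eq: "(\<integral>\<^sup>+x. ennreal \<bar>a x - b x\<bar> \<partial>N) = 2 * \<gamma>" .
  have "emeasure (density N a) S = (\<integral>\<^sup>+x. ennreal (b x) * indicator S x + ennreal (a x - b x) \<partial>N)"
    using nonneg by (auto simp: emeasure_density S_def indicator_def ennreal_plus[symmetric] ennreal_neg
        simp del: ennreal_plus intro!: nn_integral_cong)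
  also have "\<dots> = emeasure (density N b) S + \<gamma>"
    unfolding \<gamma>_def by (subst nn_integral_add) (auto simp: emeasure_density)
  finally have split: "emeasure (density N a) S = emeasure (density N b) S + \<gamma>" .
  interpret Pa: prob_space "density N a"
    by (rule prob_space_density_real) (simp_all add: a1)
  interpret Pb: prob_space "density N b"
    by (rule prob_space_density_real) (simp_all add: b1)
  have "ennreal (measure (density N a) S) = ennreal (measure (density N b) S) + \<gamma>"
    using split by (simp add: Pa.emeasure_eq_measure Pb.emeasure_eq_measure)
  then have "\<gamma> = ennreal (measure (density N a) S) - ennreal (measure (density N b) S)"
    by (simp add: ennreal_add_diff_cancel_left)
  also have "\<dots> = ennreal (measure (density N a) S - measure (density N b) S)"
    by (simp add: ennreal_minus)
  also have "\<dots> \<le> ennreal (dTV (density N a) (density N b))"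
    using dTV_upper[OF Pa.finite_measure_axioms Pb.prob_space_axioms, of S] by (intro ennreal_leI) simp
  finally show ?thesis
    unfolding abs_eq by (rule mult_left_mono) simp
qed

lemma ennreal_mult_le_add_pos_part:
  fixes a b :: real and c :: ennreal
  assumes "0 \<le> a" "0 \<le> b" "c \<le> 1"
  shows "ennreal a * c \<le> ennreal b * c + ennreal (a - b)"
proof (cases "a \<le> b")
  case True
  then show ?thesis
    by (intro add_increasing2 mult_right_mono ennreal_leI) auto
next
  case False
  then have "ennreal a = ennreal b + ennreal (a - b)"
    using assms by (simp add: ennreal_plus[symmetric] del: ennreal_plus)
  then have "ennreal a * c = ennreal b * c + ennreal (a - b) * c"
    by (simp add: distrib_right)
  also have "ennreal (a - b) * c \<le> ennreal (a - b)"
    using assms(3) by (simp add: mult_left_le)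
  finally show ?thesis
    by simp
qed

lemma nn_integral_mult_le_add_pos_part:
  fixes p1 p2 :: "'a \<Rightarrow> real" and k :: "'a \<Rightarrow> ennreal"
  assumes [measurable]: "p1 \<in> borel_measurable N" "p2 \<in> borel_measurable N" "k \<in> borel_measurable N"
    and "\<And>z. z \<in> space N \<Longrightarrow> 0 \<le> p1 z" "\<And>z. z \<in> space N \<Longrightarrow> 0 \<le> p2 z"
    and "\<And>z. z \<in> space N \<Longrightarrow> k z \<le> 1"
  shows "(\<integral>\<^sup>+z. ennreal (p1 z) * k z \<partial>N)
    \<le> (\<integral>\<^sup>+z. ennreal (p2 z) * k z \<partial>N) + (\<integral>\<^sup>+z. ennreal (p1 z - p2 z) \<partial>N)"
proof -
  have "(\<integral>\<^sup>+z. ennreal (p1 z) * k z \<partial>N) \<le> (\<integral>\<^sup>+z. ennreal (p2 z) * k z + ennreal (p1 z - p2 z) \<partial>N)"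
    using assms by (intro nn_integral_mono ennreal_mult_le_add_pos_part) auto
  also have "\<dots> = (\<integral>\<^sup>+z. ennreal (p2 z) * k z \<partial>N) + (\<integral>\<^sup>+z. ennreal (p1 z - p2 z) \<partial>N)"
    by (rule nn_integral_add) auto
  finally show ?thesis .
qed

text \<open>The positive parts of \<open>p - q\<close> and \<open>q - p\<close> have the same mass, half the \<open>L\<^sup>1\<close> distance,
  and each bounds the difference of the two laws on every event.\<close>

lemma dTV_le_common_kernel:
  fixes N :: "'a measure" and P Q :: "'b measure" and p q :: "'a \<Rightarrow> real"
    and k :: "'b set \<Rightarrow> 'a \<Rightarrow> ennreal"
  assumes [measurable]: "p \<in> borel_measurable N" "q \<in> borel_measurable N"
    and p_nonneg: "\<And>z. z \<in> space N \<Longrightarrow> 0 \<le> p z" and q_nonneg: "\<And>z. z \<in> space N \<Longrightarrow> 0 \<le> q z"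
    and p1: "(\<integral>\<^sup>+z. ennreal (p z) \<partial>N) = 1" and q1: "(\<integral>\<^sup>+z. ennreal (q z) \<partial>N) = 1"
    and k_meas: "\<And>A. A \<in> sets P \<Longrightarrow> k A \<in> borel_measurable N"
    and k_le1: "\<And>A z. A \<in> sets P \<Longrightarrow> z \<in> space N \<Longrightarrow> k A z \<le> 1"
    and P_eq: "\<And>A. A \<in> sets P \<Longrightarrow> emeasure P A = (\<integral>\<^sup>+z. ennreal (p z) * k A z \<partial>N)"
    and Q_eq: "\<And>A. A \<in> sets P \<Longrightarrow> emeasure Q A = (\<integral>\<^sup>+z. ennreal (q z) * k A z \<partial>N)"
  shows "2 * ennreal (dTV P Q) \<le> (\<integral>\<^sup>+z. ennreal \<bar>p z - q z\<bar> \<partial>N)"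
proof -
  define D where "D = (\<integral>\<^sup>+z. ennreal (p z - q z) \<partial>N)"
  have D_swap: "(\<integral>\<^sup>+z. ennreal (q z - p z) \<partial>N) = D"
    unfolding D_def using p_nonneg q_nonneg p1 q1 by (intro nn_integral_pos_part_swap) auto
  have "D \<le> (\<integral>\<^sup>+z. ennreal (p z) \<partial>N)"
    unfolding D_def using q_nonneg by (intro nn_integral_mono ennreal_leI) auto
  then have "D \<noteq> \<infinity>"
    using p1 by (auto simp: top_unique)
  then obtain d where d: "D = ennreal d" "0 \<le> d"
    by (cases D) auto
  have "dTV P Q \<le> d"
  proof (rule dTV_least)
    fix A assume A: "A \<in> sets P"
    note [measurable] = k_meas[OF A]
    have PQ: "emeasure P A \<le> emeasure Q A + D"
      unfolding P_eq[OF A] Q_eq[OF A] D_def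
      using p_nonneg q_nonneg k_le1[OF A] by (intro nn_integral_mult_le_add_pos_part) simp_all
    have QP: "emeasure Q A \<le> emeasure P A + D"
      unfolding P_eq[OF A] Q_eq[OF A] D_swap[symmetric]
      using p_nonneg q_nonneg k_le1[OF A] by (intro nn_integral_mult_le_add_pos_part) simp_all
    have "emeasure P A \<le> (\<integral>\<^sup>+z. ennreal (p z) \<partial>N)" "emeasure Q A \<le> (\<integral>\<^sup>+z. ennreal (q z) \<partial>N)"
      unfolding P_eq[OF A] Q_eq[OF A] using k_le1[OF A] by (intro nn_integral_mono; simp add: mult_left_le)+
    then have "emeasure P A \<noteq> \<infinity>" "emeasure Q A \<noteq> \<infinity>"
      using p1 q1 by (auto simp: top_unique)
    with PQ QP show "\<bar>measure P A - measure Q A\<bar> \<le> d"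
      by (auto simp: d emeasure_eq_ennreal_measure ennreal_plus[symmetric] ennreal_le_iff abs_le_iff
          simp del: ennreal_plus)
  qed
  then have "2 * ennreal (dTV P Q) \<le> 2 * D"
    unfolding d by (intro mult_left_mono ennreal_leI) auto
  also have "\<dots> = (\<integral>\<^sup>+z. ennreal \<bar>p z - q z\<bar> \<partial>N)"
    unfolding ennreal_abs_diff_eq_pos_parts by (subst nn_integral_add) (auto simp: D_def D_swap mult_2)
  finally show ?thesis .
qed

lemma d_exch_le_dTV:
  assumes "finite_measure L" and "prob_space E"
    and "sets E = sets (PiM {0..M} (\<lambda>_. MX))" and "exchangeable {0..M} E"
  shows "d_exch MX M L \<le> dTV L E"
  unfolding d_exch_def using assms dTV_nonneg[OF assms(1)]
  by (intro cINF_lower bdd_belowI2[where m = 0]) auto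

section \<open>Kernels and coordinate maps\<close>

lemma measurable_density_kernel:
  fixes g :: "'a \<Rightarrow> 'b \<Rightarrow> ennreal"
  assumes sf: "sigma_finite_measure N" and ne: "space N \<noteq> {}"
    and g[measurable]: "(\<lambda>(x, y). g x y) \<in> borel_measurable (M \<Otimes>\<^sub>M N)"
    and le1: "\<And>x. x \<in> space M \<Longrightarrow> (\<integral>\<^sup>+y. g x y \<partial>N) \<le> 1"
  shows "(\<lambda>x. density N (g x)) \<in> M \<rightarrow>\<^sub>M subprob_algebra N"
proof (rule measurable_subprob_algebra)
  fix x assume x: "x \<in> space M"
  have "emeasure (density N (g x)) (space N) = (\<integral>\<^sup>+y. g x y \<partial>N)"
    using x by (subst emeasure_density) (auto intro!: nn_integral_cong)
  then show "subprob_space (density N (g x))"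
    using le1[OF x] ne by (intro subprob_spaceI) simp_all
  show "sets (density N (g x)) = sets N"
    by simp
next
  interpret sigma_finite_measure N by fact
  fix A assume [measurable]: "A \<in> sets N"
  have "(\<lambda>x. \<integral>\<^sup>+y. g x y * indicator A y \<partial>N) \<in> borel_measurable M"
    by measurable
  then show "(\<lambda>x. emeasure (density N (g x)) A) \<in> borel_measurable M"
    by (subst measurable_cong[where g = "\<lambda>x. \<integral>\<^sup>+y. g x y * indicator A y \<partial>N"])
      (auto simp: emeasure_density)
qed

lemma measurable_fun_upd_PiM:
  assumes "i \<notin> J"
  shows "(\<lambda>(x, y). y(i := x)) \<in> N \<Otimes>\<^sub>M PiM J (\<lambda>_. N) \<rightarrow>\<^sub>M PiM (insert i J) (\<lambda>_. N)"
proof -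
  have "(\<lambda>(x, y). y(i := x)) = (\<lambda>\<omega> j. if j = i then fst \<omega> else snd \<omega> j)"
    by (auto simp: fun_eq_iff)
  moreover have "(\<lambda>\<omega> j. if j = i then fst \<omega> else snd \<omega> j)
      \<in> N \<Otimes>\<^sub>M PiM J (\<lambda>_. N) \<rightarrow>\<^sub>M PiM (insert i J) (\<lambda>_. N)"
  proof (rule measurable_PiM_single')
    show "(\<lambda>\<omega>. if j = i then fst \<omega> else snd \<omega> j) \<in> N \<Otimes>\<^sub>M PiM J (\<lambda>_. N) \<rightarrow>\<^sub>M N"
      if "j \<in> insert i J" for j
      using that by (cases "j = i") simp_all
    show "(\<lambda>\<omega> j. if j = i then fst \<omega> else snd \<omega> j)
        \<in> space (N \<Otimes>\<^sub>M PiM J (\<lambda>_. N)) \<rightarrow> insert i J \<rightarrow>\<^sub>E space N"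
      using assms by (auto simp: space_pair_measure space_PiM PiE_iff extensional_def split: if_splits)
  qed
  ultimately show ?thesis
    by simp
qed

lemma measurable_permute_PiM:
  assumes p: "p permutes I"
  shows "(\<lambda>z. z \<circ> p) \<in> PiM I (\<lambda>_. N) \<rightarrow>\<^sub>M PiM I (\<lambda>_. N)"
proof -
  have "(\<lambda>z i. z (p i)) \<in> PiM I (\<lambda>_. N) \<rightarrow>\<^sub>M PiM I (\<lambda>_. N)"
  proof (rule measurable_PiM_single')
    show "(\<lambda>z. z (p i)) \<in> PiM I (\<lambda>_. N) \<rightarrow>\<^sub>M N" if "i \<in> I" for i
      using that permutes_in_image[OF p] by simp
    show "(\<lambda>z i. z (p i)) \<in> space (PiM I (\<lambda>_. N)) \<rightarrow> I \<rightarrow>\<^sub>E space N"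
      using permutes_in_image[OF p] permutes_not_in[OF p]
      by (auto simp: space_PiM PiE_def extensional_def Pi_iff)
  qed
  then show ?thesis
    by (simp add: comp_def)
qed

section \<open>The posterior resampling scheme\<close>

lemma fbar_nonneg: "0 \<le> fbar MT f rho x"
  by (simp add: fbar_def)

lemma is_density_nonneg: "is_density MT rho \<Longrightarrow> \<theta> \<in> space MT \<Longrightarrow> 0 \<le> rho \<theta>"
  by (simp add: is_density_def)

lemma is_density_measurable: "is_density MT rho \<Longrightarrow> rho \<in> borel_measurable MT"
  by (simp add: is_density_def)

locale posterior_resampling =
  fixes MX :: "'x measure" and MT :: "'t measure"
    and f :: "'t \<Rightarrow> 'x \<Rightarrow> real" and pr :: "'t \<Rightarrow> real"
    and B M :: nat and \<theta>0 :: 't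
    and Q :: "'x \<Rightarrow> (nat \<Rightarrow> 't) \<Rightarrow> (nat \<Rightarrow> 'x) measure"
  assumes sfX: "sigma_finite_measure MX" and sfT: "sigma_finite_measure MT"
    and f_meas: "(\<lambda>(\<theta>, x). f \<theta> x) \<in> borel_measurable (MT \<Otimes>\<^sub>M MX)"
    and f_nonneg: "\<And>\<theta> x. \<theta> \<in> space MT \<Longrightarrow> x \<in> space MX \<Longrightarrow> 0 \<le> f \<theta> x"
    and f_dens: "\<And>\<theta>. \<theta> \<in> space MT \<Longrightarrow> (\<integral>\<^sup>+ x. ennreal (f \<theta> x) \<partial>MX) = 1"
    and pi_dens: "is_density MT pr"
    and pi_pos: "\<And>\<theta>. \<theta> \<in> space MT \<Longrightarrow> 0 < pr \<theta>"
    and pi_supp: "supp_cover MX MT f pr"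
    and B: "1 \<le> B"
    and Q_kernel: "(\<lambda>(x, ts). Q x ts) \<in> MX \<Otimes>\<^sub>M PiM {1..B} (\<lambda>_. MT)
                      \<rightarrow>\<^sub>M prob_algebra (PiM {1..M} (\<lambda>_. MX))"
    and Q_exch: "\<And>ts. ts \<in> space (PiM {1..B} (\<lambda>_. MT)) \<Longrightarrow>
        0 < g_const MX MT f pr B ts \<Longrightarrow> g_const MX MT f pr B ts < \<infinity> \<Longrightarrow>
        exchangeable {0..M}
          (joint_law MX M (density MX (g_dens MX MT f pr B ts)) (\<lambda>x. Q x ts))"
    and \<theta>0: "\<theta>0 \<in> space MT"
begin

text \<open>Keeps \<open>{1..B}\<close> from being rewritten to \<open>{Suc 0..B}\<close>, which would detach terms from the
  abbreviation \<^term>\<open>MTB\<close> and its lemmas.\<close>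

declare One_nat_def [simp del]

abbreviation "MTB \<equiv> PiM {1..B} (\<lambda>_. MT)"
abbreviation "MX0M \<equiv> PiM {0..M} (\<lambda>_. MX)"
abbreviation "MX1M \<equiv> PiM {1..M} (\<lambda>_. MX)"
abbreviation "post \<equiv> post_dens MT f pr"

text \<open>The marginal likelihood before the truncation \<open>enn2real\<close> of \<^const>\<open>fbar\<close>, which sends an
  infinite integral to \<open>0\<close>.\<close>

definition fbar_nn :: "('t \<Rightarrow> real) \<Rightarrow> 'x \<Rightarrow> ennreal" where
  "fbar_nn rho x = (\<integral>\<^sup>+\<theta>. ennreal (rho \<theta> * f \<theta> x) \<partial>MT)"

definition post_prod :: "'x \<Rightarrow> (nat \<Rightarrow> 't) \<Rightarrow> real" where
  "post_prod x ts = (\<Prod>b\<in>{1..B}. post x (ts b))"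

definition resample_prob :: "(nat \<Rightarrow> 'x) set \<Rightarrow> 'x \<Rightarrow> (nat \<Rightarrow> 't) \<Rightarrow> ennreal" where
  "resample_prob A x ts = (\<integral>\<^sup>+y. indicator A (y(0 := x)) \<partial>Q x ts)"

lemma f_meas_swap[measurable]: "(\<lambda>(x, \<theta>). f \<theta> x) \<in> borel_measurable (MX \<Otimes>\<^sub>M MT)"
  using measurable_pair_swap[OF f_meas] by simp

lemma f_\<theta>0_meas[measurable]: "f \<theta>0 \<in> borel_measurable MX"
  using measurable_Pair2[OF f_meas \<theta>0] by simp

lemma pr_meas[measurable]: "pr \<in> borel_measurable MT"
  using is_density_measurable[OF pi_dens] .

lemma space_MX_nonempty: "space MX \<noteq> {}"
  using f_dens[OF \<theta>0] by (auto simp: nn_integral_empty)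

lemma space_MTB_nonempty: "space MTB \<noteq> {}"
  using \<theta>0 by (auto simp: space_PiM PiE_eq_empty_iff)

lemma space_MTB_component: "ts \<in> space MTB \<Longrightarrow> b \<in> {1..B} \<Longrightarrow> ts b \<in> space MT"
  by (auto simp: space_PiM)

lemma sigma_finite_MTB: "sigma_finite_measure MTB"
  by (rule product_sigma_finite.sigma_finite) (auto simp: product_sigma_finite_def sfT)

lemma fbar_nn_meas[measurable]:
  assumes [measurable]: "rho \<in> borel_measurable MT"
  shows "fbar_nn rho \<in> borel_measurable MX"
proof -
  interpret sigma_finite_measure MT
    by (rule sfT)
  show ?thesis
    unfolding fbar_nn_def by measurable
qed

lemma fbar_meas[measurable]:
  assumes [measurable]: "rho \<in> borel_measurable MT"
  shows "fbar MT f rho \<in> borel_measurable MX"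
proof -
  have "fbar MT f rho = (\<lambda>x. enn2real (fbar_nn rho x))"
    by (auto simp: fbar_def fbar_nn_def fun_eq_iff)
  then show ?thesis
    by simp
qed

lemma post_meas[measurable]: "(\<lambda>(x, \<theta>). post_dens MT f rho x \<theta>) \<in> borel_measurable (MX \<Otimes>\<^sub>M MT)"
  if [measurable]: "rho \<in> borel_measurable MT"
  unfolding post_dens_def by measurable

lemma post_prod_meas[measurable]: "(\<lambda>(x, ts). post_prod x ts) \<in> borel_measurable (MX \<Otimes>\<^sub>M MTB)"
  unfolding post_prod_def by measurable

lemma post_prod_meas_section: "x \<in> space MX \<Longrightarrow> (\<lambda>ts. post_prod x ts) \<in> borel_measurable MTB"
  using measurable_Pair2[OF post_prod_meas] by simp

lemma nn_integral_fbar_nn: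
  assumes rho: "is_density MT rho"
  shows "(\<integral>\<^sup>+x. fbar_nn rho x \<partial>MX) = 1"
proof -
  have [measurable]: "rho \<in> borel_measurable MT"
    using is_density_measurable[OF rho] .
  interpret P: pair_sigma_finite MX MT
    by (intro pair_sigma_finite.intro sfX sfT)
  have "(\<integral>\<^sup>+x. fbar_nn rho x \<partial>MX) = (\<integral>\<^sup>+\<theta>. \<integral>\<^sup>+x. ennreal (rho \<theta> * f \<theta> x) \<partial>MX \<partial>MT)"
    unfolding fbar_nn_def by (rule P.Fubini'[symmetric]) measurable
  also have "\<dots> = (\<integral>\<^sup>+\<theta>. ennreal (rho \<theta>) * \<integral>\<^sup>+x. ennreal (f \<theta> x) \<partial>MX \<partial>MT)"
    using is_density_nonneg[OF rho] f_nonneg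
    by (intro nn_integral_cong) (auto simp: ennreal_mult nn_integral_cmult[symmetric] intro!: nn_integral_cong)
  also have "\<dots> = (\<integral>\<^sup>+\<theta>. ennreal (rho \<theta>) \<partial>MT)"
    using f_dens by (intro nn_integral_cong) simp
  also have "\<dots> = 1"
    using rho by (simp add: is_density_def)
  finally show ?thesis .
qed

lemma AE_fbar_nn_finite:
  assumes rho: "is_density MT rho"
  shows "AE x in MX. fbar_nn rho x \<noteq> \<infinity>"
  using is_density_measurable[OF rho]
  by (intro nn_integral_noteq_infinite) (auto simp: nn_integral_fbar_nn[OF rho])

lemma fbar_nn_eq_fbar: "fbar_nn rho x \<noteq> \<infinity> \<Longrightarrow> fbar_nn rho x = ennreal (fbar MT f rho x)"
  by (simp add: fbar_def fbar_nn_def less_top[symmetric])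

lemma fbar_nn_eq_fbar_if_pos: "0 < fbar MT f rho x \<Longrightarrow> fbar_nn rho x = ennreal (fbar MT f rho x)"
  by (intro fbar_nn_eq_fbar) (auto simp: fbar_def fbar_nn_def)

lemma nn_integral_fbar:
  assumes rho: "is_density MT rho"
  shows "(\<integral>\<^sup>+x. ennreal (fbar MT f rho x) \<partial>MX) = 1"
proof -
  have "(\<integral>\<^sup>+x. ennreal (fbar MT f rho x) \<partial>MX) = (\<integral>\<^sup>+x. fbar_nn rho x \<partial>MX)"
    using AE_fbar_nn_finite[OF rho] by (intro nn_integral_cong_AE) (auto simp: fbar_nn_eq_fbar)
  then show ?thesis
    using nn_integral_fbar_nn[OF rho] by simp
qed

lemma post_nonneg: "\<theta> \<in> space MT \<Longrightarrow> x \<in> space MX \<Longrightarrow> 0 \<le> post x \<theta>"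
  unfolding post_dens_def using pi_pos f_nonneg fbar_nonneg
  by (intro divide_nonneg_nonneg mult_nonneg_nonneg) (auto intro: less_imp_le)

lemma nn_integral_post:
  assumes x: "x \<in> space MX"
  shows "(\<integral>\<^sup>+\<theta>. ennreal (post x \<theta>) \<partial>MT) = (if 0 < fbar MT f pr x then 1 else 0)"
proof (cases "0 < fbar MT f pr x")
  case True
  have "(\<integral>\<^sup>+\<theta>. ennreal (post x \<theta>) \<partial>MT)
      = (\<integral>\<^sup>+\<theta>. ennreal (pr \<theta> * f \<theta> x) * ennreal (1 / fbar MT f pr x) \<partial>MT)"
    using True pi_pos f_nonneg x
    by (intro nn_integral_cong) (auto simp: post_dens_def ennreal_mult[symmetric] less_imp_le)
  also have "\<dots> = fbar_nn pr x * ennreal (1 / fbar MT f pr x)"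
    unfolding fbar_nn_def by (rule nn_integral_multc) (use x in measurable)
  also have "\<dots> = 1"
    using True by (simp add: fbar_nn_eq_fbar_if_pos ennreal_mult[symmetric])
  finally show ?thesis
    using True by simp
next
  case False
  then show ?thesis
    using fbar_nonneg[of MT f pr x] by (simp add: post_dens_def)
qed

lemma prob_space_post:
  assumes x: "x \<in> space MX" and F: "0 < fbar MT f pr x"
  shows "prob_space (density MT (post x))"
proof (rule prob_space_density_real)
  show "post x \<in> borel_measurable MT"
    using measurable_Pair2[OF post_meas[OF pr_meas] x] by simp
  show "(\<integral>\<^sup>+\<theta>. ennreal (post x \<theta>) \<partial>MT) = 1"
    using nn_integral_post[OF x] F by simp
qed

lemma post_prod_nonneg: "ts \<in> space MTB \<Longrightarrow> x \<in> space MX \<Longrightarrow> 0 \<le> post_prod x ts"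
  unfolding post_prod_def by (intro prod_nonneg post_nonneg) (auto simp: space_PiM)

lemma post_prod_eq_0: "fbar MT f pr x = 0 \<Longrightarrow> post_prod x ts = 0"
  using B by (auto simp: post_prod_def post_dens_def intro!: prod_zero bexI[of _ 1])

lemma nn_integral_post_prod:
  assumes x: "x \<in> space MX"
  shows "(\<integral>\<^sup>+ts. ennreal (post_prod x ts) \<partial>MTB) = (if 0 < fbar MT f pr x then 1 else 0)"
proof -
  interpret PN: product_sigma_finite "\<lambda>_. MT"
    unfolding product_sigma_finite_def using sfT by simp
  have "(\<integral>\<^sup>+ts. ennreal (post_prod x ts) \<partial>MTB) = (\<integral>\<^sup>+ts. (\<Prod>b\<in>{1..B}. ennreal (post x (ts b))) \<partial>MTB)"
    using x by (intro nn_integral_cong)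
      (auto simp: post_prod_def space_PiM PiE_mem intro!: prod_ennreal[symmetric] post_nonneg)
  also have "\<dots> = (\<Prod>b\<in>{1..B}. \<integral>\<^sup>+\<theta>. ennreal (post x \<theta>) \<partial>MT)"
    by (rule PN.product_nn_integral_prod) (use x in auto)
  finally show ?thesis
    using x B by (simp add: nn_integral_post)
qed

lemma PiM_post_eq_density:
  assumes x: "x \<in> space MX"
  shows "PiM {1..B} (\<lambda>_. density MT (post x)) = density MTB (\<lambda>ts. ennreal (post_prod x ts))"
proof -
  have "PiM {1..B} (\<lambda>_. density MT (post x)) = density MTB (\<lambda>ts. \<Prod>b\<in>{1..B}. ennreal (post x (ts b)))"
    using x by (intro PiM_density sfT) (auto simp: nn_integral_post)
  also have "\<dots> = density MTB (\<lambda>ts. ennreal (post_prod x ts))"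
    using x by (intro density_cong AE_I2)
      (auto simp: post_prod_def space_PiM PiE_mem intro!: prod_ennreal post_nonneg)
  finally show ?thesis .
qed

lemma post_prod_kernel: "(\<lambda>x. density MTB (\<lambda>ts. ennreal (post_prod x ts))) \<in> MX \<rightarrow>\<^sub>M subprob_algebra MTB"
proof (rule measurable_density_kernel[OF sigma_finite_MTB space_MTB_nonempty])
  show "(\<lambda>(x, ts). ennreal (post_prod x ts)) \<in> borel_measurable (MX \<Otimes>\<^sub>M MTB)"
    by measurable
  show "(\<integral>\<^sup>+ts. ennreal (post_prod x ts) \<partial>MTB) \<le> 1" if "x \<in> space MX" for x
    using that by (subst nn_integral_post_prod) auto
qed

lemma update0_meas[measurable]: "(\<lambda>(x, y). y(0 := x)) \<in> MX \<Otimes>\<^sub>M MX1M \<rightarrow>\<^sub>M MX0M"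
proof -
  have "insert 0 {1..M} = {0..M}"
    by auto
  then show ?thesis
    using measurable_fun_upd_PiM[of 0 "{1..M}" MX] by simp
qed

lemma update0_space: "x \<in> space MX \<Longrightarrow> y \<in> space MX1M \<Longrightarrow> y(0 := x) \<in> space MX0M"
  using measurable_space[OF update0_meas, of "(x, y)"] by (simp add: space_pair_measure)

lemma update0_return_kernel: "(\<lambda>(x, y). return MX0M (y(0 := x))) \<in> MX \<Otimes>\<^sub>M MX1M \<rightarrow>\<^sub>M subprob_algebra MX0M"
  using measurable_compose[OF update0_meas return_measurable] by (simp add: case_prod_beta')

lemma update0_return_kernel_fixed:
  "x \<in> space MX \<Longrightarrow> (\<lambda>y. return MX0M (y(0 := x))) \<in> MX1M \<rightarrow>\<^sub>M subprob_algebra MX0M"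
  using measurable_Pair2[OF update0_return_kernel] by simp

lemma Q_subprob_kernel[measurable]: "(\<lambda>(x, ts). Q x ts) \<in> MX \<Otimes>\<^sub>M MTB \<rightarrow>\<^sub>M subprob_algebra MX1M"
  using measurable_prob_algebraD[OF Q_kernel] .

lemma Q_prob:
  assumes "x \<in> space MX" "ts \<in> space MTB"
  shows "prob_space (Q x ts)" and "sets (Q x ts) = sets MX1M"
  using measurable_space[OF Q_kernel, of "(x, ts)"] assms
  by (simp_all add: space_pair_measure space_prob_algebra)

lemma forget_params_meas: "(\<lambda>z. (fst (fst z), snd z)) \<in> (MX \<Otimes>\<^sub>M MTB) \<Otimes>\<^sub>M MX1M \<rightarrow>\<^sub>M MX \<Otimes>\<^sub>M MX1M"
  by measurable

lemma resample_prob_meas: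
  assumes A: "A \<in> sets MX0M"
  shows "(\<lambda>(x, ts). resample_prob A x ts) \<in> borel_measurable (MX \<Otimes>\<^sub>M MTB)"
proof -
  have "(\<lambda>z. (snd z)(0 := fst (fst z))) \<in> (MX \<Otimes>\<^sub>M MTB) \<Otimes>\<^sub>M MX1M \<rightarrow>\<^sub>M MX0M"
    using measurable_compose[OF forget_params_meas update0_meas] by (simp add: case_prod_beta)
  from measurable_compose[OF this borel_measurable_indicator[OF A]]
  have "(\<lambda>(z, y). indicator A (y(0 := fst z)) :: ennreal) \<in> borel_measurable ((MX \<Otimes>\<^sub>M MTB) \<Otimes>\<^sub>M MX1M)"
    by (simp add: case_prod_beta')
  from nn_integral_measurable_subprob_algebra2[OF this Q_subprob_kernel] show ?thesis
    by (simp add: resample_prob_def case_prod_beta')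
qed

lemma resample_prob_meas_section:
  "x \<in> space MX \<Longrightarrow> A \<in> sets MX0M \<Longrightarrow> resample_prob A x \<in> borel_measurable MTB"
  using measurable_Pair2[OF resample_prob_meas] by simp

lemma resample_prob_le_1:
  assumes x: "x \<in> space MX" and ts: "ts \<in> space MTB"
  shows "resample_prob A x ts \<le> 1"
proof -
  interpret prob_space "Q x ts"
    using Q_prob[OF x ts] by simp
  have "resample_prob A x ts \<le> (\<integral>\<^sup>+y. 1 \<partial>Q x ts)"
    unfolding resample_prob_def by (intro nn_integral_mono) (simp add: indicator_def)
  then show ?thesis
    by (simp add: emeasure_space_1)
qed

lemma resample_prob_space:
  assumes x: "x \<in> space MX" and ts: "ts \<in> space MTB"
  shows "resample_prob (space MX0M) x ts = 1"
proof -
  interpret prob_space "Q x ts"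
    using Q_prob[OF x ts] by simp
  have "resample_prob (space MX0M) x ts = (\<integral>\<^sup>+y. 1 \<partial>Q x ts)"
    unfolding resample_prob_def using update0_space[OF x] sets_eq_imp_space_eq[OF Q_prob(2)[OF x ts]]
    by (intro nn_integral_cong) simp
  then show ?thesis
    by (simp add: emeasure_space_1)
qed

definition joint_kernel :: "'x \<Rightarrow> (nat \<Rightarrow> 't) \<Rightarrow> (nat \<Rightarrow> 'x) measure" where
  "joint_kernel x ts = Q x ts \<bind> (\<lambda>y. return MX0M (y(0 := x)))"

lemma emeasure_joint_kernel:
  assumes x: "x \<in> space MX" and ts: "ts \<in> space MTB" and A: "A \<in> sets MX0M"
  shows "emeasure (joint_kernel x ts) A = resample_prob A x ts"
proof -
  have "(\<lambda>y. return MX0M (y(0 := x))) \<in> Q x ts \<rightarrow>\<^sub>M subprob_algebra MX0M"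
    using update0_return_kernel_fixed[OF x] by (simp add: measurable_cong_sets[OF Q_prob(2)[OF x ts] refl])
  then show ?thesis
    using A prob_space.not_empty[OF Q_prob(1)[OF x ts]]
    by (simp add: joint_kernel_def emeasure_bind resample_prob_def)
qed

lemma joint_kernel_meas: "(\<lambda>(x, ts). joint_kernel x ts) \<in> MX \<Otimes>\<^sub>M MTB \<rightarrow>\<^sub>M subprob_algebra MX0M"
proof -
  have "(\<lambda>(z, y). return MX0M (y(0 := fst z))) \<in> (MX \<Otimes>\<^sub>M MTB) \<Otimes>\<^sub>M MX1M \<rightarrow>\<^sub>M subprob_algebra MX0M"
    using measurable_compose[OF forget_params_meas update0_return_kernel] by (simp add: case_prod_beta')
  from measurable_bind'[OF Q_subprob_kernel this] show ?thesis
    by (simp add: joint_kernel_def case_prod_beta')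
qed

lemma joint_kernel_prob_kernel:
  assumes ts: "ts \<in> space MTB"
  shows "(\<lambda>x. joint_kernel x ts) \<in> MX \<rightarrow>\<^sub>M prob_algebra MX0M"
proof (rule measurable_prob_algebraI)
  show "(\<lambda>x. joint_kernel x ts) \<in> MX \<rightarrow>\<^sub>M subprob_algebra MX0M"
    using measurable_Pair1[OF joint_kernel_meas ts] by simp
  fix x assume x: "x \<in> space MX"
  have "(\<lambda>y. return MX0M (y(0 := x))) \<in> MX1M \<rightarrow>\<^sub>M prob_algebra MX0M"
    using update0_return_kernel_fixed[OF x] update0_space[OF x]
    by (intro measurable_prob_algebraI) (auto intro: prob_space_return)
  then show "prob_space (joint_kernel x ts)"
    using Q_prob[OF x ts] unfolding joint_kernel_def
    by (intro prob_space_bind'[where M = MX1M]) (auto simp: space_prob_algebra)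
qed

abbreviation "L \<equiv> joint_law MX M (density MX (f \<theta>0))
   (\<lambda>x. PiM {1..B} (\<lambda>_. density MT (post x)) \<bind> (\<lambda>ts. Q x ts))"

abbreviation "post_draws x \<equiv> density MTB (\<lambda>ts. ennreal (post_prod x ts))"

definition L_kernel :: "'x \<Rightarrow> (nat \<Rightarrow> 'x) measure" where
  "L_kernel x = (post_draws x \<bind> Q x) \<bind> (\<lambda>y. return MX0M (y(0 := x)))"

definition p_dens :: "'x \<Rightarrow> (nat \<Rightarrow> 't) \<Rightarrow> real" where
  "p_dens x ts = f \<theta>0 x * post_prod x ts"

lemma L_eq_bind: "L = density MX (f \<theta>0) \<bind> L_kernel"
  unfolding joint_law_def
proof (intro bind_cong refl)
  fix x assume "x \<in> space (density MX (f \<theta>0))"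
  then have x: "x \<in> space MX"
    by simp
  show "PiM {1..B} (\<lambda>_. density MT (post x)) \<bind> Q x \<bind> (\<lambda>y. return MX0M (y(0 := x))) = L_kernel x"
    by (simp only: L_kernel_def PiM_post_eq_density[OF x])
qed

lemma posterior_Q_kernel: "(\<lambda>x. post_draws x \<bind> Q x) \<in> MX \<rightarrow>\<^sub>M subprob_algebra MX1M"
  by (rule measurable_bind'[OF post_prod_kernel Q_subprob_kernel])

lemma L_kernel_meas: "L_kernel \<in> MX \<rightarrow>\<^sub>M subprob_algebra MX0M"
  using measurable_bind'[OF posterior_Q_kernel update0_return_kernel] unfolding L_kernel_def[abs_def] .

lemma emeasure_L_kernel:
  assumes x: "x \<in> space MX" and A: "A \<in> sets MX0M"
  shows "emeasure (L_kernel x) A = (\<integral>\<^sup>+ts. ennreal (post_prod x ts) * resample_prob A x ts \<partial>MTB)"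
proof -
  have PQ: "post_draws x \<bind> Q x \<in> space (subprob_algebra MX1M)"
    using measurable_space[OF posterior_Q_kernel x] .
  have sets_PQ: "sets (post_draws x \<bind> Q x) = sets MX1M"
    using PQ by (simp add: space_subprob_algebra)
  have "(\<lambda>y. return MX0M (y(0 := x))) \<in> (post_draws x \<bind> Q x) \<rightarrow>\<^sub>M subprob_algebra MX0M"
    using update0_return_kernel_fixed[OF x] by (simp only: measurable_cong_sets[OF sets_PQ refl])
  moreover have "space (post_draws x \<bind> Q x) \<noteq> {}"
    using PQ by (auto simp: space_subprob_algebra dest: subprob_space.subprob_not_empty)
  ultimately have "emeasure (L_kernel x) A = (\<integral>\<^sup>+y. indicator A (y(0 := x)) \<partial>(post_draws x \<bind> Q x))"
    unfolding L_kernel_def using A by (simp add: emeasure_bind)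
  also have "\<dots> = (\<integral>\<^sup>+ts. resample_prob A x ts \<partial>post_draws x)"
  proof -
    have "(\<lambda>y. y(0 := x)) \<in> MX1M \<rightarrow>\<^sub>M MX0M"
      using measurable_Pair2[OF update0_meas x] by simp
    moreover have "(\<lambda>ts. Q x ts) \<in> post_draws x \<rightarrow>\<^sub>M subprob_algebra MX1M"
      using measurable_Pair2[OF Q_subprob_kernel x] by simp
    ultimately show ?thesis
      unfolding resample_prob_def using A by (intro nn_integral_bind) auto
  qed
  also have "\<dots> = (\<integral>\<^sup>+ts. ennreal (post_prod x ts) * resample_prob A x ts \<partial>MTB)"
    using resample_prob_meas_section[OF x A] post_prod_meas_section[OF x] by (intro nn_integral_density) auto
  finally show ?thesis .
qed

lemma emeasure_L:
  assumes A: "A \<in> sets MX0M"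
  shows "emeasure L A = (\<integral>\<^sup>+x. \<integral>\<^sup>+ts. ennreal (p_dens x ts) * resample_prob A x ts \<partial>MTB \<partial>MX)"
proof -
  have "L_kernel \<in> density MX (f \<theta>0) \<rightarrow>\<^sub>M subprob_algebra MX0M"
    using L_kernel_meas by simp
  then have "emeasure L A = (\<integral>\<^sup>+x. emeasure (L_kernel x) A \<partial>density MX (f \<theta>0))"
    unfolding L_eq_bind using A space_MX_nonempty by (intro emeasure_bind) simp_all
  also have "\<dots> = (\<integral>\<^sup>+x. ennreal (f \<theta>0 x) * emeasure (L_kernel x) A \<partial>MX)"
    using measurable_emeasure_kernel[OF L_kernel_meas A] by (intro nn_integral_density) simp_all
  also have "\<dots> = (\<integral>\<^sup>+x. \<integral>\<^sup>+ts. ennreal (p_dens x ts) * resample_prob A x ts \<partial>MTB \<partial>MX)"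
  proof (intro nn_integral_cong)
    fix x assume x: "x \<in> space MX"
    have "ennreal (f \<theta>0 x) * emeasure (L_kernel x) A
        = (\<integral>\<^sup>+ts. ennreal (f \<theta>0 x) * (ennreal (post_prod x ts) * resample_prob A x ts) \<partial>MTB)"
      using resample_prob_meas_section[OF x A] post_prod_meas_section[OF x]
      by (simp add: emeasure_L_kernel[OF x A] nn_integral_cmult[symmetric])
    also have "\<dots> = (\<integral>\<^sup>+ts. ennreal (p_dens x ts) * resample_prob A x ts \<partial>MTB)"
      using f_nonneg[OF \<theta>0 x] by (intro nn_integral_cong) (simp add: p_dens_def ennreal_mult' mult.assoc)
    finally show "ennreal (f \<theta>0 x) * emeasure (L_kernel x) A
        = (\<integral>\<^sup>+ts. ennreal (p_dens x ts) * resample_prob A x ts \<partial>MTB)" .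
  qed
  finally show ?thesis .
qed

lemma sets_L: "sets L = sets MX0M"
  unfolding L_eq_bind using L_kernel_meas space_MX_nonempty
  by (intro sets_bind_measurable) simp_all

lemma p_dens_meas[measurable]: "(\<lambda>(x, ts). p_dens x ts) \<in> borel_measurable (MX \<Otimes>\<^sub>M MTB)"
  unfolding p_dens_def[abs_def] by measurable

lemma p_dens_nonneg: "x \<in> space MX \<Longrightarrow> ts \<in> space MTB \<Longrightarrow> 0 \<le> p_dens x ts"
  unfolding p_dens_def using f_nonneg[OF \<theta>0] post_prod_nonneg by simp

lemma p_dens_eq_0: "fbar MT f pr x = 0 \<Longrightarrow> p_dens x ts = 0"
  by (simp add: p_dens_def post_prod_eq_0)

lemma nn_integral_p_dens: "(\<integral>\<^sup>+x. \<integral>\<^sup>+ts. ennreal (p_dens x ts) \<partial>MTB \<partial>MX) = 1"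
proof -
  have "(\<integral>\<^sup>+ts. ennreal (p_dens x ts) \<partial>MTB) = ennreal (f \<theta>0 x)"
    if x: "x \<in> space MX" and supp: "0 < f \<theta>0 x \<longrightarrow> 0 < fbar MT f pr x" for x
  proof -
    have "(\<integral>\<^sup>+ts. ennreal (p_dens x ts) \<partial>MTB) = (\<integral>\<^sup>+ts. ennreal (f \<theta>0 x) * ennreal (post_prod x ts) \<partial>MTB)"
      using f_nonneg[OF \<theta>0 x] by (intro nn_integral_cong) (simp add: p_dens_def ennreal_mult')
    also have "\<dots> = ennreal (f \<theta>0 x) * (\<integral>\<^sup>+ts. ennreal (post_prod x ts) \<partial>MTB)"
      using post_prod_meas_section[OF x] by (intro nn_integral_cmult) simp
    finally show ?thesis
      using nn_integral_post_prod[OF x] supp f_nonneg[OF \<theta>0 x] by (cases "0 < f \<theta>0 x") auto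
  qed
  moreover have "AE x in MX. 0 < f \<theta>0 x \<longrightarrow> 0 < fbar MT f pr x"
    using pi_supp \<theta>0 by (simp add: supp_cover_def)
  ultimately have "(\<integral>\<^sup>+x. \<integral>\<^sup>+ts. ennreal (p_dens x ts) \<partial>MTB \<partial>MX) = (\<integral>\<^sup>+x. ennreal (f \<theta>0 x) \<partial>MX)"
    by (intro nn_integral_cong_AE) auto
  then show ?thesis
    using f_dens[OF \<theta>0] by simp
qed

lemma prob_space_L: "prob_space L"
proof (rule prob_spaceI)
  have "emeasure L (space MX0M) = (\<integral>\<^sup>+x. \<integral>\<^sup>+ts. ennreal (p_dens x ts) \<partial>MTB \<partial>MX)"
    unfolding emeasure_L[OF sets.top] by (intro nn_integral_cong) (simp add: resample_prob_space)
  then show "emeasure L (space L) = 1"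
    using nn_integral_p_dens sets_eq_imp_space_eq[OF sets_L] by simp
qed

end

section \<open>An exchangeable law close to the scheme\<close>

locale posterior_resampling_ref = posterior_resampling MX MT f pr B M \<theta>0 Q
  for MX :: "'x measure" and MT :: "'t measure" and f pr B M \<theta>0 Q +
  fixes pi0 :: "'t \<Rightarrow> real"
  assumes pi0_dens: "is_density MT pi0"
begin

abbreviation "gc \<equiv> g_const MX MT f pr B"
abbreviation "gu \<equiv> g_unnorm MT f pr B"

definition ratio :: "'t \<Rightarrow> real" where
  "ratio \<theta> = pi0 \<theta> / pr \<theta>"

definition ratio_mean :: "(nat \<Rightarrow> 't) \<Rightarrow> real" where
  "ratio_mean ts = (\<Sum>b\<in>{1..B}. ratio (ts b)) / real B"

definition prior_prod :: "(nat \<Rightarrow> 't) \<Rightarrow> real" where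
  "prior_prod ts = (\<Prod>b\<in>{1..B}. pr (ts b))"

definition mix_dens :: "(nat \<Rightarrow> 't) \<Rightarrow> ennreal" where
  "mix_dens ts = ennreal (prior_prod ts * ratio_mean ts) * gc ts"

lemma pi0_meas[measurable]: "pi0 \<in> borel_measurable MT"
  using is_density_measurable[OF pi0_dens] .

lemma ratio_meas[measurable]: "ratio \<in> borel_measurable MT"
  unfolding ratio_def by measurable

lemma ratio_nonneg: "\<theta> \<in> space MT \<Longrightarrow> 0 \<le> ratio \<theta>"
  unfolding ratio_def using is_density_nonneg[OF pi0_dens] pi_pos by (simp add: less_imp_le)

lemma ratio_mean_meas[measurable]: "ratio_mean \<in> borel_measurable MTB"
  unfolding ratio_mean_def by measurable

lemma ratio_mean_nonneg: "ts \<in> space MTB \<Longrightarrow> 0 \<le> ratio_mean ts"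
  unfolding ratio_mean_def by (intro divide_nonneg_nonneg sum_nonneg ratio_nonneg) (auto simp: space_PiM)

lemma prior_prod_meas[measurable]: "prior_prod \<in> borel_measurable MTB"
  unfolding prior_prod_def by measurable

lemma prior_prod_nonneg: "ts \<in> space MTB \<Longrightarrow> 0 \<le> prior_prod ts"
  unfolding prior_prod_def using pi_pos space_MTB_component by (intro prod_nonneg) (auto intro: less_imp_le)

lemma gu_meas[measurable]: "(\<lambda>(ts, x). gu ts x) \<in> borel_measurable (MTB \<Otimes>\<^sub>M MX)"
proof -
  have [measurable]: "(\<lambda>z. f (fst z b) (snd z)) \<in> borel_measurable (MTB \<Otimes>\<^sub>M MX)" if "b \<in> {1..B}" for b
    using measurable_compose[OF _ f_meas, of "\<lambda>z. (fst z b, snd z)"] that by (simp add: case_prod_beta)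
  show ?thesis
    unfolding g_unnorm_def by (simp add: case_prod_beta') measurable
qed

lemma gu_nonneg: "ts \<in> space MTB \<Longrightarrow> x \<in> space MX \<Longrightarrow> 0 \<le> gu ts x"
  unfolding g_unnorm_def using f_nonneg fbar_nonneg space_MTB_component
  by (intro divide_nonneg_nonneg prod_nonneg zero_le_power) auto

lemma gc_meas[measurable]: "gc \<in> borel_measurable MTB"
proof -
  interpret sigma_finite_measure MX
    by (rule sfX)
  show ?thesis
    unfolding g_const_def[abs_def] by measurable
qed

lemma mix_dens_meas[measurable]: "mix_dens \<in> borel_measurable MTB"
  unfolding mix_dens_def by measurable

lemma fbar_nn_pi0_eq_0:
  assumes x: "x \<in> space MX" and z: "fbar_nn pr x = 0"
  shows "fbar_nn pi0 x = 0"
proof -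
  have "AE \<theta> in MT. ennreal (pr \<theta> * f \<theta> x) = 0"
    using z x unfolding fbar_nn_def by (subst nn_integral_0_iff_AE[symmetric]) auto
  then have "AE \<theta> in MT. ennreal (pi0 \<theta> * f \<theta> x) = 0"
  proof (rule AE_mp, intro AE_I2 impI)
    fix \<theta> assume \<theta>: "\<theta> \<in> space MT" and "ennreal (pr \<theta> * f \<theta> x) = 0"
    then have "pr \<theta> * f \<theta> x \<le> 0"
      by (simp add: ennreal_eq_0_iff)
    then have "f \<theta> x = 0"
      using pi_pos[OF \<theta>] f_nonneg[OF \<theta> x] by (simp add: mult_le_0_iff)
    then show "ennreal (pi0 \<theta> * f \<theta> x) = 0"
      by simp
  qed
  then show ?thesis
    unfolding fbar_nn_def using x by (subst nn_integral_0_iff_AE) auto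
qed

lemma prior_prod_ratio_mean_gu_eq:
  assumes x: "x \<in> space MX" and ts: "ts \<in> space MTB"
  shows "ennreal (prior_prod ts * ratio_mean ts * gu ts x)
    = ennreal (1 / (real B * fbar MT f pr x ^ (B - 1)))
      * ((\<Prod>b\<in>{1..B}. ennreal (pr (ts b) * f (ts b) x)) * (\<Sum>b\<in>{1..B}. ennreal (ratio (ts b))))"
proof -
  have lik: "0 \<le> pr (ts b) * f (ts b) x" and rat: "0 \<le> ratio (ts b)" if "b \<in> {1..B}" for b
    using pi_pos f_nonneg[OF _ x] ratio_nonneg space_MTB_component[OF ts that]
    by (auto intro: less_imp_le mult_nonneg_nonneg)
  define P where "P = (\<Prod>b\<in>{1..B}. pr (ts b) * f (ts b) x)"
  define S where "S = (\<Sum>b\<in>{1..B}. ratio (ts b))"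
  define c where "c = 1 / (real B * fbar MT f pr x ^ (B - 1))"
  have "prior_prod ts * ratio_mean ts * gu ts x = c * (P * S)"
    by (simp add: prior_prod_def ratio_mean_def g_unnorm_def c_def P_def S_def prod.distrib
        divide_inverse inverse_mult_distrib mult_ac)
  moreover have "ennreal (c * (P * S)) = ennreal c * (ennreal P * ennreal S)"
  proof -
    have "0 \<le> P"
      unfolding P_def by (rule prod_nonneg) (rule lik)
    moreover have "0 \<le> S"
      unfolding S_def by (rule sum_nonneg) (rule rat)
    moreover have "0 \<le> c"
      unfolding c_def using fbar_nonneg[of MT f pr x] by simp
    ultimately show ?thesis
      by (simp add: ennreal_mult)
  qed
  moreover have "ennreal P = (\<Prod>b\<in>{1..B}. ennreal (pr (ts b) * f (ts b) x))"
    unfolding P_def by (rule prod_ennreal[symmetric]) (rule lik)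
  moreover have "ennreal S = (\<Sum>b\<in>{1..B}. ennreal (ratio (ts b)))"
    unfolding S_def by (rule sum_ennreal[symmetric]) (rule rat)
  ultimately show ?thesis
    by (simp only: c_def)
qed

text \<open>The key identity: averaging the likelihood ratio over the draws turns the
  \<open>B\<close>-fold posterior into the marginal likelihood of \<open>pi0\<close>.\<close>

lemma nn_integral_prior_prod_ratio_mean_gu:
  assumes x: "x \<in> space MX" and fin: "fbar_nn pr x \<noteq> \<infinity>"
  shows "(\<integral>\<^sup>+ts. ennreal (prior_prod ts * ratio_mean ts * gu ts x) \<partial>MTB) = fbar_nn pi0 x"
proof -
  define F where "F = fbar MT f pr x"
  define c where "c = 1 / (real B * F ^ (B - 1))"
  have c: "0 \<le> c"
    unfolding c_def F_def using fbar_nonneg[of MT f pr x] by simp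
  have lik_ratio: "(\<integral>\<^sup>+\<theta>. ennreal (pr \<theta> * f \<theta> x) * ennreal (ratio \<theta>) \<partial>MT) = fbar_nn pi0 x"
    unfolding fbar_nn_def
  proof (intro nn_integral_cong)
    fix \<theta> assume \<theta>: "\<theta> \<in> space MT"
    show "ennreal (pr \<theta> * f \<theta> x) * ennreal (ratio \<theta>) = ennreal (pi0 \<theta> * f \<theta> x)"
      using pi_pos[OF \<theta>] f_nonneg[OF \<theta> x] ratio_nonneg[OF \<theta>]
      by (simp add: ennreal_mult[symmetric] ratio_def mult.commute)
  qed
  have "(\<integral>\<^sup>+ts. ennreal (prior_prod ts * ratio_mean ts * gu ts x) \<partial>MTB)
      = (\<integral>\<^sup>+ts. ennreal c * ((\<Prod>b\<in>{1..B}. ennreal (pr (ts b) * f (ts b) x)) * (\<Sum>b\<in>{1..B}. ennreal (ratio (ts b)))) \<partial>MTB)"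
    unfolding c_def F_def by (intro nn_integral_cong prior_prod_ratio_mean_gu_eq[OF x])
  also have "\<dots> = ennreal c * (\<integral>\<^sup>+ts. (\<Prod>b\<in>{1..B}. ennreal (pr (ts b) * f (ts b) x)) * (\<Sum>b\<in>{1..B}. ennreal (ratio (ts b))) \<partial>MTB)"
    by (rule nn_integral_cmult) (use x in measurable)
  also have "\<dots> = ennreal c * (of_nat B * (fbar_nn pi0 x * fbar_nn pr x ^ (B - 1)))"
    using x by (subst nn_integral_PiM_prod_mult_sum[OF sfT]) (simp_all add: lik_ratio fbar_nn_def)
  also have "\<dots> = fbar_nn pi0 x"
  proof (cases "0 < F")
    case True
    have "fbar_nn pr x = ennreal F"
      unfolding F_def by (rule fbar_nn_eq_fbar[OF fin])
    then have "ennreal c * (of_nat B * (fbar_nn pi0 x * fbar_nn pr x ^ (B - 1)))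
        = ennreal (c * real B * F ^ (B - 1)) * fbar_nn pi0 x"
      using True c by (simp add: ennreal_mult ennreal_power ennreal_of_nat_eq_real_of_nat mult_ac)
    also have "c * real B * F ^ (B - 1) = 1"
      unfolding c_def using True B by simp
    finally show ?thesis
      by simp
  next
    case False
    then have "fbar_nn pr x = 0"
      using fbar_nn_eq_fbar[OF fin] fbar_nonneg[of MT f pr x] by (simp add: F_def)
    then show ?thesis
      using fbar_nn_pi0_eq_0[OF x] by simp
  qed
  finally show ?thesis .
qed

lemma prior_prod_ratio_mean_mult_gc:
  assumes ts: "ts \<in> space MTB"
  shows "ennreal (prior_prod ts * ratio_mean ts) * gc ts
    = (\<integral>\<^sup>+x. ennreal (prior_prod ts * ratio_mean ts * gu ts x) \<partial>MX)"
proof -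
  have "(\<lambda>x. ennreal (gu ts x)) \<in> borel_measurable MX"
    using measurable_Pair2[OF gu_meas ts] by simp
  then have "ennreal (prior_prod ts * ratio_mean ts) * gc ts
      = (\<integral>\<^sup>+x. ennreal (prior_prod ts * ratio_mean ts) * ennreal (gu ts x) \<partial>MX)"
    unfolding g_const_def by (rule nn_integral_cmult[symmetric])
  also have "\<dots> = (\<integral>\<^sup>+x. ennreal (prior_prod ts * ratio_mean ts * gu ts x) \<partial>MX)"
    using prior_prod_nonneg[OF ts] ratio_mean_nonneg[OF ts] gu_nonneg[OF ts]
    by (intro nn_integral_cong) (simp add: ennreal_mult)
  finally show ?thesis .
qed

lemma nn_integral_mix_dens: "(\<integral>\<^sup>+ts. mix_dens ts \<partial>MTB) = 1"
proof -
  interpret P: pair_sigma_finite MTB MX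
    by (intro pair_sigma_finite.intro sigma_finite_MTB sfX)
  have "(\<integral>\<^sup>+ts. mix_dens ts \<partial>MTB) = (\<integral>\<^sup>+ts. \<integral>\<^sup>+x. ennreal (prior_prod ts * ratio_mean ts * gu ts x) \<partial>MX \<partial>MTB)"
    unfolding mix_dens_def by (intro nn_integral_cong prior_prod_ratio_mean_mult_gc)
  also have "\<dots> = (\<integral>\<^sup>+x. \<integral>\<^sup>+ts. ennreal (prior_prod ts * ratio_mean ts * gu ts x) \<partial>MTB \<partial>MX)"
    by (rule P.Fubini'[symmetric]) (use gu_meas in measurable)
  also have "\<dots> = (\<integral>\<^sup>+x. fbar_nn pi0 x \<partial>MX)"
  proof (rule nn_integral_cong_AE)
    show "AE x in MX. (\<integral>\<^sup>+ts. ennreal (prior_prod ts * ratio_mean ts * gu ts x) \<partial>MTB) = fbar_nn pi0 x"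
      using AE_space AE_fbar_nn_finite[OF pi_dens]
      by eventually_elim (rule nn_integral_prior_prod_ratio_mean_gu)
  qed
  finally show ?thesis
    using nn_integral_fbar_nn[OF pi0_dens] by simp
qed

definition proper :: "(nat \<Rightarrow> 't) \<Rightarrow> bool" where
  "proper ts \<longleftrightarrow> 0 < gc ts \<and> gc ts < \<infinity>"

definition g_dens0 :: "(nat \<Rightarrow> 't) \<Rightarrow> 'x \<Rightarrow> ennreal" where
  "g_dens0 ts x = (if proper ts then ennreal (g_dens MX MT f pr B ts x) else 0)"

definition const_point :: "nat \<Rightarrow> 'x" where
  "const_point = (\<lambda>i\<in>{0..M}. SOME x. x \<in> space MX)"

text \<open>Where \<open>g_pi(. | ts)\<close> is not a probability density any exchangeable law serves; these \<open>ts\<close>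
  carry no mixing weight anyway.\<close>

definition mix_kernel :: "(nat \<Rightarrow> 't) \<Rightarrow> (nat \<Rightarrow> 'x) measure" where
  "mix_kernel ts = (if proper ts then density MX (g_dens0 ts) \<bind> (\<lambda>x. joint_kernel x ts)
    else return MX0M const_point)"

definition E :: "(nat \<Rightarrow> 'x) measure" where
  "E = density MTB mix_dens \<bind> mix_kernel"

lemma proper_meas[measurable]: "Measurable.pred MTB proper"
  unfolding proper_def by measurable

lemma g_dens0_meas[measurable]: "(\<lambda>(ts, x). g_dens0 ts x) \<in> borel_measurable (MTB \<Otimes>\<^sub>M MX)"
proof -
  have "(\<lambda>(ts, x). g_dens MX MT f pr B ts x) \<in> borel_measurable (MTB \<Otimes>\<^sub>M MX)"
    unfolding g_dens_def using gu_meas by (simp add: case_prod_beta') measurable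
  then show ?thesis
    unfolding g_dens0_def by (simp add: case_prod_beta') measurable
qed

lemma nn_integral_g_dens0:
  assumes ts: "ts \<in> space MTB"
  shows "(\<integral>\<^sup>+x. g_dens0 ts x \<partial>MX) = (if proper ts then 1 else 0)"
proof (cases "proper ts")
  case True
  define r where "r = enn2real (gc ts)"
  have gc_r: "gc ts = ennreal r" and r: "0 < r"
    using True unfolding proper_def r_def by (auto simp: less_top enn2real_positive_iff)
  have "(\<lambda>x. ennreal (gu ts x)) \<in> borel_measurable MX"
    using measurable_Pair2[OF gu_meas ts] by simp
  moreover have "(\<integral>\<^sup>+x. g_dens0 ts x \<partial>MX) = (\<integral>\<^sup>+x. ennreal (gu ts x) * ennreal (1 / r) \<partial>MX)"
    using True r gu_nonneg[OF ts]
    by (intro nn_integral_cong) (simp add: g_dens0_def g_dens_def r_def[symmetric] ennreal_mult[symmetric])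
  ultimately show ?thesis
    using True r by (simp add: nn_integral_multc g_const_def[symmetric] gc_r ennreal_mult[symmetric])
qed (simp add: g_dens0_def)

lemma mix_kernel_meas: "mix_kernel \<in> MTB \<rightarrow>\<^sub>M subprob_algebra MX0M"
proof -
  have "(\<lambda>ts. density MX (g_dens0 ts)) \<in> MTB \<rightarrow>\<^sub>M subprob_algebra MX"
    using nn_integral_g_dens0 by (intro measurable_density_kernel[OF sfX space_MX_nonempty g_dens0_meas]) simp
  moreover have "(\<lambda>(ts, x). joint_kernel x ts) \<in> MTB \<Otimes>\<^sub>M MX \<rightarrow>\<^sub>M subprob_algebra MX0M"
    using measurable_compose[OF measurable_pair_swap' joint_kernel_meas] by (simp add: case_prod_beta')
  ultimately have "(\<lambda>ts. density MX (g_dens0 ts) \<bind> (\<lambda>x. joint_kernel x ts)) \<in> MTB \<rightarrow>\<^sub>M subprob_algebra MX0M"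
    by (rule measurable_bind')
  moreover have "const_point \<in> space MX0M"
    using space_MX_nonempty by (auto simp: const_point_def space_PiM some_in_eq)
  ultimately show ?thesis
    unfolding mix_kernel_def[abs_def]
    by (intro measurable_If measurable_const) (auto simp: space_subprob_algebra subprob_space_return)
qed

lemma mix_kernel_proper:
  assumes ts: "ts \<in> space MTB" and proper: "proper ts"
  shows "mix_kernel ts = joint_law MX M (density MX (g_dens MX MT f pr B ts)) (\<lambda>x. Q x ts)"
proof -
  have "g_dens0 ts = (\<lambda>x. ennreal (g_dens MX MT f pr B ts x))"
    using proper by (auto simp: g_dens0_def fun_eq_iff)
  then show ?thesis
    using proper by (simp add: mix_kernel_def joint_law_def joint_kernel_def)
qed

lemma mix_kernel_prob:
  assumes ts: "ts \<in> space MTB"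
  shows "prob_space (mix_kernel ts)" and "sets (mix_kernel ts) = sets MX0M"
proof -
  have "prob_space (density MX (g_dens0 ts) \<bind> (\<lambda>x. joint_kernel x ts))
    \<and> sets (density MX (g_dens0 ts) \<bind> (\<lambda>x. joint_kernel x ts)) = sets MX0M"
    if proper: "proper ts"
  proof -
    have "emeasure (density MX (g_dens0 ts)) (space MX) = 1"
      using measurable_Pair2[OF g_dens0_meas ts] nn_integral_g_dens0[OF ts] proper
      by (simp add: emeasure_density cong: nn_integral_cong_simp)
    then have "density MX (g_dens0 ts) \<in> space (prob_algebra MX)"
      by (simp add: space_prob_algebra prob_spaceI)
    then show ?thesis
      using prob_space_bind'[OF _ joint_kernel_prob_kernel[OF ts]] sets_bind'[OF _ joint_kernel_prob_kernel[OF ts]]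
      by blast
  qed
  moreover have "const_point \<in> space MX0M"
    using space_MX_nonempty by (auto simp: const_point_def space_PiM some_in_eq)
  ultimately show "prob_space (mix_kernel ts)" and "sets (mix_kernel ts) = sets MX0M"
    by (auto simp: mix_kernel_def prob_space_return)
qed

lemma density_mix_dens_prob: "density MTB mix_dens \<in> space (prob_algebra MTB)"
  using nn_integral_mix_dens
  by (auto simp: space_prob_algebra emeasure_density intro!: prob_spaceI cong: nn_integral_cong_simp)

lemma mix_kernel_prob_kernel: "mix_kernel \<in> MTB \<rightarrow>\<^sub>M prob_algebra MX0M"
  using mix_kernel_prob by (intro measurable_prob_algebraI mix_kernel_meas) blast

lemma prob_space_E: "prob_space E" and sets_E: "sets E = sets MX0M"
  unfolding E_def
  using prob_space_bind'[OF density_mix_dens_prob mix_kernel_prob_kernel]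
    sets_bind'[OF density_mix_dens_prob mix_kernel_prob_kernel]
  by auto

lemma exchangeable_E: "exchangeable {0..M} E"
  unfolding exchangeable_def
proof (intro allI impI)
  fix p assume p: "p permutes {0..M}"
  have perm: "(\<lambda>z. z \<circ> p) \<in> MX0M \<rightarrow>\<^sub>M MX0M"
    by (rule measurable_permute_PiM[OF p])
  have kernel: "mix_kernel \<in> density MTB mix_dens \<rightarrow>\<^sub>M subprob_algebra MX0M"
    using mix_kernel_meas by simp
  have "distr E E (\<lambda>z. z \<circ> p) = distr E MX0M (\<lambda>z. z \<circ> p)"
    by (rule distr_cong) (simp_all add: sets_E)
  also have "\<dots> = density MTB mix_dens \<bind> (\<lambda>ts. distr (mix_kernel ts) MX0M (\<lambda>z. z \<circ> p))"
    unfolding E_def using space_MTB_nonempty by (intro distr_bind[OF kernel _ perm]) simp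
  also have "\<dots> = E"
    unfolding E_def
  proof (intro bind_cong refl)
    fix ts assume "ts \<in> space (density MTB mix_dens)"
    then have ts: "ts \<in> space MTB"
      by simp
    show "distr (mix_kernel ts) MX0M (\<lambda>z. z \<circ> p) = mix_kernel ts"
    proof (cases "proper ts")
      case True
      then have "distr (mix_kernel ts) (mix_kernel ts) (\<lambda>z. z \<circ> p) = mix_kernel ts"
        using Q_exch[OF ts] p by (simp add: mix_kernel_proper[OF ts] proper_def exchangeable_def)
      moreover have "distr (mix_kernel ts) MX0M (\<lambda>z. z \<circ> p) = distr (mix_kernel ts) (mix_kernel ts) (\<lambda>z. z \<circ> p)"
        by (rule distr_cong) (simp_all add: mix_kernel_prob(2)[OF ts])
      ultimately show ?thesis
        by simp
    next
      case False
      have "const_point \<circ> p = const_point"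
        using permutes_in_image[OF p] permutes_not_in[OF p] by (auto simp: const_point_def fun_eq_iff)
      moreover have "const_point \<in> space MX0M"
        using space_MX_nonempty by (auto simp: const_point_def space_PiM some_in_eq)
      ultimately show ?thesis
        using False distr_return[OF perm] by (simp add: mix_kernel_def)
    qed
  qed
  finally show "distr E E (\<lambda>z. z \<circ> p) = E" .
qed

lemma emeasure_mix_kernel_proper:
  assumes ts: "ts \<in> space MTB" and proper: "proper ts" and A: "A \<in> sets MX0M"
  shows "emeasure (mix_kernel ts) A
    = (\<integral>\<^sup>+x. ennreal (g_dens MX MT f pr B ts x) * resample_prob A x ts \<partial>MX)"
proof -
  have [measurable]: "g_dens0 ts \<in> borel_measurable MX"
    using measurable_Pair2[OF g_dens0_meas ts] by simp
  have kernel: "(\<lambda>x. joint_kernel x ts) \<in> MX \<rightarrow>\<^sub>M subprob_algebra MX0M"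
    using measurable_prob_algebraD[OF joint_kernel_prob_kernel[OF ts]] .
  then have "emeasure (mix_kernel ts) A = (\<integral>\<^sup>+x. emeasure (joint_kernel x ts) A \<partial>density MX (g_dens0 ts))"
    using proper A space_MX_nonempty by (simp add: mix_kernel_def emeasure_bind)
  also have "\<dots> = (\<integral>\<^sup>+x. g_dens0 ts x * emeasure (joint_kernel x ts) A \<partial>MX)"
    using measurable_emeasure_kernel[OF kernel A] by (intro nn_integral_density) simp_all
  also have "\<dots> = (\<integral>\<^sup>+x. ennreal (g_dens MX MT f pr B ts x) * resample_prob A x ts \<partial>MX)"
    using proper ts A by (intro nn_integral_cong) (simp add: g_dens0_def emeasure_joint_kernel)
  finally show ?thesis .
qed

lemma mix_dens_emeasure_mix_kernel:
  assumes ts: "ts \<in> space MTB" and fin: "mix_dens ts \<noteq> \<infinity>" and A: "A \<in> sets MX0M"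
  shows "mix_dens ts * emeasure (mix_kernel ts) A
    = (\<integral>\<^sup>+x. ennreal (prior_prod ts * ratio_mean ts * gu ts x) * resample_prob A x ts \<partial>MX)"
proof (cases "proper ts")
  case True
  define r where "r = enn2real (gc ts)"
  have gc_r: "gc ts = ennreal r" and r: "0 < r"
    using True unfolding proper_def r_def by (auto simp: less_top enn2real_positive_iff)
  have weight: "ennreal (prior_prod ts * ratio_mean ts) * ennreal r * ennreal (g_dens MX MT f pr B ts x)
      = ennreal (prior_prod ts * ratio_mean ts * gu ts x)" if x: "x \<in> space MX" for x
    using r prior_prod_nonneg[OF ts] ratio_mean_nonneg[OF ts] gu_nonneg[OF ts x]
    by (simp add: g_dens_def r_def[symmetric] ennreal_mult[symmetric])
  have "mix_dens ts * emeasure (mix_kernel ts) A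
      = ennreal (prior_prod ts * ratio_mean ts) * ennreal r
        * (\<integral>\<^sup>+x. ennreal (g_dens MX MT f pr B ts x) * resample_prob A x ts \<partial>MX)"
    by (simp add: mix_dens_def emeasure_mix_kernel_proper[OF ts True A] gc_r)
  also have "\<dots> = (\<integral>\<^sup>+x. ennreal (prior_prod ts * ratio_mean ts) * ennreal r
        * (ennreal (g_dens MX MT f pr B ts x) * resample_prob A x ts) \<partial>MX)"
    using measurable_Pair1[OF resample_prob_meas[OF A] ts] measurable_Pair2[OF g_dens0_meas ts] True
    by (intro nn_integral_cmult[symmetric]) (simp add: g_dens0_def)
  also have "\<dots> = (\<integral>\<^sup>+x. ennreal (prior_prod ts * ratio_mean ts * gu ts x) * resample_prob A x ts \<partial>MX)"
    by (intro nn_integral_cong) (simp add: weight mult.assoc[symmetric])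
  finally show ?thesis .
next
  case False
  have zero: "ennreal (prior_prod ts * ratio_mean ts) * gc ts = 0"
  proof (cases "gc ts = 0")
    case False
    then have "gc ts = \<infinity>"
      using \<open>\<not> proper ts\<close> by (simp add: proper_def less_top[symmetric] not_gr_zero)
    then show ?thesis
      using fin by (simp add: mix_dens_def ennreal_mult_eq_top_iff)
  qed simp
  have "(\<integral>\<^sup>+x. ennreal (prior_prod ts * ratio_mean ts * gu ts x) * resample_prob A x ts \<partial>MX)
      \<le> (\<integral>\<^sup>+x. ennreal (prior_prod ts * ratio_mean ts * gu ts x) \<partial>MX)"
    using resample_prob_le_1[OF _ ts] by (intro nn_integral_mono) (simp add: mult_left_le)
  then show ?thesis
    using zero by (simp add: mix_dens_def prior_prod_ratio_mean_mult_gc[OF ts])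
qed

lemma emeasure_E_bind:
  assumes A: "A \<in> sets MX0M"
  shows "emeasure E A = (\<integral>\<^sup>+ts. mix_dens ts * emeasure (mix_kernel ts) A \<partial>MTB)"
  unfolding E_def emeasure_bind_prob_algebra[OF density_mix_dens_prob mix_kernel_prob_kernel A]
  by (rule nn_integral_density[OF mix_dens_meas measurable_emeasure_kernel[OF mix_kernel_meas A]])

definition q_dens :: "'x \<Rightarrow> (nat \<Rightarrow> 't) \<Rightarrow> real" where
  "q_dens x ts = fbar MT f pr x * post_prod x ts * ratio_mean ts"

lemma q_dens_meas[measurable]: "(\<lambda>(x, ts). q_dens x ts) \<in> borel_measurable (MX \<Otimes>\<^sub>M MTB)"
  unfolding q_dens_def[abs_def] by measurable

lemma q_dens_nonneg: "x \<in> space MX \<Longrightarrow> ts \<in> space MTB \<Longrightarrow> 0 \<le> q_dens x ts"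
  unfolding q_dens_def by (intro mult_nonneg_nonneg fbar_nonneg post_prod_nonneg ratio_mean_nonneg)

lemma q_dens_eq_0: "fbar MT f pr x = 0 \<Longrightarrow> q_dens x ts = 0"
  by (simp add: q_dens_def)

lemma prior_prod_ratio_mean_gu_eq_q_dens:
  assumes F: "0 < fbar MT f pr x"
  shows "prior_prod ts * ratio_mean ts * gu ts x = q_dens x ts"
proof -
  define F where "F = fbar MT f pr x"
  have "F ^ B = F * F ^ (B - 1)"
    using B by (simp add: power_eq_if)
  moreover have "post_prod x ts = (\<Prod>b\<in>{1..B}. pr (ts b) * f (ts b) x) / F ^ B"
    by (simp add: post_prod_def post_dens_def F_def prod_dividef)
  ultimately show ?thesis
    using F by (simp add: q_dens_def prior_prod_def g_unnorm_def prod.distrib F_def[symmetric])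
qed

lemma nn_integral_q_dens_section:
  assumes x: "x \<in> space MX" and F: "0 < fbar MT f pr x"
  shows "(\<integral>\<^sup>+ts. ennreal (q_dens x ts) \<partial>MTB) = fbar_nn pi0 x"
  using nn_integral_prior_prod_ratio_mean_gu[OF x] fbar_nn_eq_fbar_if_pos[OF F]
  by (simp add: prior_prod_ratio_mean_gu_eq_q_dens[OF F])

lemma nn_integral_gu_resample_eq_q_dens:
  assumes x: "x \<in> space MX" and fin: "fbar_nn pr x \<noteq> \<infinity>" and A: "A \<in> sets MX0M"
  shows "(\<integral>\<^sup>+ts. ennreal (prior_prod ts * ratio_mean ts * gu ts x) * resample_prob A x ts \<partial>MTB)
    = (\<integral>\<^sup>+ts. ennreal (q_dens x ts) * resample_prob A x ts \<partial>MTB)"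
proof (cases "0 < fbar MT f pr x")
  case True
  then show ?thesis
    by (simp add: prior_prod_ratio_mean_gu_eq_q_dens)
next
  case False
  then have F: "fbar MT f pr x = 0"
    using fbar_nonneg[of MT f pr x] by simp
  have "(\<integral>\<^sup>+ts. ennreal (prior_prod ts * ratio_mean ts * gu ts x) * resample_prob A x ts \<partial>MTB)
      \<le> (\<integral>\<^sup>+ts. ennreal (prior_prod ts * ratio_mean ts * gu ts x) \<partial>MTB)"
    using resample_prob_le_1[OF x] by (intro nn_integral_mono) (simp add: mult_left_le)
  also have "\<dots> = 0"
    using nn_integral_prior_prod_ratio_mean_gu[OF x fin] fbar_nn_pi0_eq_0[OF x] fbar_nn_eq_fbar[OF fin] F
    by simp
  finally show ?thesis
    using F by (simp add: q_dens_eq_0)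
qed

lemma emeasure_E:
  assumes A: "A \<in> sets MX0M"
  shows "emeasure E A = (\<integral>\<^sup>+x. \<integral>\<^sup>+ts. ennreal (q_dens x ts) * resample_prob A x ts \<partial>MTB \<partial>MX)"
proof -
  interpret P: pair_sigma_finite MTB MX
    by (intro pair_sigma_finite.intro sigma_finite_MTB sfX)
  have "AE ts in MTB. mix_dens ts \<noteq> \<infinity>"
    using nn_integral_mix_dens by (intro nn_integral_noteq_infinite) simp_all
  with AE_space have "AE ts in MTB. mix_dens ts * emeasure (mix_kernel ts) A
      = (\<integral>\<^sup>+x. ennreal (prior_prod ts * ratio_mean ts * gu ts x) * resample_prob A x ts \<partial>MX)"
    by eventually_elim (rule mix_dens_emeasure_mix_kernel[OF _ _ A])
  then have "emeasure E A
      = (\<integral>\<^sup>+ts. \<integral>\<^sup>+x. ennreal (prior_prod ts * ratio_mean ts * gu ts x) * resample_prob A x ts \<partial>MX \<partial>MTB)"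
    unfolding emeasure_E_bind[OF A] by (rule nn_integral_cong_AE)
  also have "\<dots> = (\<integral>\<^sup>+x. \<integral>\<^sup>+ts. ennreal (prior_prod ts * ratio_mean ts * gu ts x) * resample_prob A x ts \<partial>MTB \<partial>MX)"
    using measurable_compose[OF measurable_pair_swap' resample_prob_meas[OF A]]
    by (intro P.Fubini'[symmetric]) (simp add: case_prod_beta', measurable)
  also have "\<dots> = (\<integral>\<^sup>+x. \<integral>\<^sup>+ts. ennreal (q_dens x ts) * resample_prob A x ts \<partial>MTB \<partial>MX)"
  proof (rule nn_integral_cong_AE)
    show "AE x in MX. (\<integral>\<^sup>+ts. ennreal (prior_prod ts * ratio_mean ts * gu ts x) * resample_prob A x ts \<partial>MTB)
        = (\<integral>\<^sup>+ts. ennreal (q_dens x ts) * resample_prob A x ts \<partial>MTB)"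
      using AE_space AE_fbar_nn_finite[OF pi_dens]
      by eventually_elim (rule nn_integral_gu_resample_eq_q_dens[OF _ _ A])
  qed
  finally show ?thesis .
qed

lemma nn_integral_q_dens: "(\<integral>\<^sup>+x. \<integral>\<^sup>+ts. ennreal (q_dens x ts) \<partial>MTB \<partial>MX) = 1"
proof -
  interpret prob_space E
    by (rule prob_space_E)
  have "(\<integral>\<^sup>+x. \<integral>\<^sup>+ts. ennreal (q_dens x ts) \<partial>MTB \<partial>MX) = emeasure E (space MX0M)"
    unfolding emeasure_E[OF sets.top] by (intro nn_integral_cong) (simp add: resample_prob_space)
  then show ?thesis
    using emeasure_space_1 sets_eq_imp_space_eq[OF sets_E] by simp
qed

section \<open>The \<open>L\<^sup>1\<close> estimate\<close>

lemma post_ratio: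
  assumes \<theta>: "\<theta> \<in> space MT" and F: "0 < fbar MT f pr x" and F0: "0 < fbar MT f pi0 x"
  shows "post_dens MT f pi0 x \<theta> = fbar MT f pr x / fbar MT f pi0 x * ratio \<theta> * post x \<theta>"
  using pi_pos[OF \<theta>] F F0 by (simp add: post_dens_def ratio_def field_simps)

text \<open>With \<open>sc = fbar pr / fbar pi0\<close>, the density of \<open>pi0(. | x)\<close> w.r.t. \<open>pi(. | x)\<close> is
  \<open>sc * ratio\<close>, so the chi-square divergence is the posterior variance of \<open>sc * ratio\<close>.\<close>

lemma dchi2_post_eq:
  assumes x: "x \<in> space MX" and F: "0 < fbar MT f pr x" and F0: "0 < fbar MT f pi0 x"
  shows "dchi2 MT (post_dens MT f pi0 x) (post x)
    = (\<integral>\<^sup>+\<theta>. ennreal ((fbar MT f pr x / fbar MT f pi0 x * ratio \<theta> - 1)\<^sup>2) \<partial>density MT (post x))"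
proof -
  have "AE \<theta> in MT. post x \<theta> = 0 \<longrightarrow> post_dens MT f pi0 x \<theta> = 0"
    using post_ratio[OF _ F F0] by (intro AE_I2) simp
  then have "dchi2 MT (post_dens MT f pi0 x) (post x)
      = (\<integral>\<^sup>+\<theta>. ennreal ((post_dens MT f pi0 x \<theta> / post x \<theta> - 1)\<^sup>2 * post x \<theta>) \<partial>MT)"
    by (simp add: dchi2_def)
  also have "\<dots> = (\<integral>\<^sup>+\<theta>. ennreal (post x \<theta>) * ennreal ((fbar MT f pr x / fbar MT f pi0 x * ratio \<theta> - 1)\<^sup>2) \<partial>MT)"
    using post_ratio[OF _ F F0] post_nonneg[OF _ x]
    by (intro nn_integral_cong) (auto simp: ennreal_mult[symmetric] mult.commute)
  also have "\<dots> = (\<integral>\<^sup>+\<theta>. ennreal ((fbar MT f pr x / fbar MT f pi0 x * ratio \<theta> - 1)\<^sup>2) \<partial>density MT (post x))"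
    using measurable_Pair2[OF post_meas[OF pr_meas] x] by (intro nn_integral_density[symmetric]) simp_all
  finally show ?thesis .
qed

lemma integral_ratio_post:
  assumes x: "x \<in> space MX" and F: "0 < fbar MT f pr x" and F0: "0 < fbar MT f pi0 x"
  shows "integrable (density MT (post x)) ratio"
    and "(\<integral>\<theta>. ratio \<theta> \<partial>density MT (post x)) = fbar MT f pi0 x / fbar MT f pr x"
proof -
  have post_meas_x: "post x \<in> borel_measurable MT"
    using measurable_Pair2[OF post_meas[OF pr_meas] x] by simp
  have nonneg: "AE \<theta> in density MT (post x). 0 \<le> ratio \<theta>"
    by (intro AE_I2) (simp add: ratio_nonneg)
  have "(\<integral>\<^sup>+\<theta>. ennreal (ratio \<theta>) \<partial>density MT (post x)) = (\<integral>\<^sup>+\<theta>. ennreal (post x \<theta>) * ennreal (ratio \<theta>) \<partial>MT)"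
    using post_meas_x by (intro nn_integral_density) simp_all
  also have "\<dots> = (\<integral>\<^sup>+\<theta>. ennreal (pi0 \<theta> * f \<theta> x) * ennreal (1 / fbar MT f pr x) \<partial>MT)"
  proof (intro nn_integral_cong)
    fix \<theta> assume \<theta>: "\<theta> \<in> space MT"
    have "post x \<theta> * ratio \<theta> = pi0 \<theta> * f \<theta> x * (1 / fbar MT f pr x)"
      using pi_pos[OF \<theta>] by (simp add: post_dens_def ratio_def)
    then show "ennreal (post x \<theta>) * ennreal (ratio \<theta>) = ennreal (pi0 \<theta> * f \<theta> x) * ennreal (1 / fbar MT f pr x)"
      using post_nonneg[OF \<theta> x] ratio_nonneg[OF \<theta>] F is_density_nonneg[OF pi0_dens \<theta>] f_nonneg[OF \<theta> x]
      by (simp add: ennreal_mult[symmetric])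
  qed
  also have "\<dots> = ennreal (fbar MT f pi0 x / fbar MT f pr x)"
    using x F fbar_nonneg[of MT f pi0 x]
    by (simp add: nn_integral_multc fbar_nn_def[symmetric] fbar_nn_eq_fbar_if_pos[OF F0]
        ennreal_mult[symmetric] divide_inverse)
  finally have nn: "(\<integral>\<^sup>+\<theta>. ennreal (ratio \<theta>) \<partial>density MT (post x)) = ennreal (fbar MT f pi0 x / fbar MT f pr x)" .
  show int: "integrable (density MT (post x)) ratio"
    using nn nonneg by (intro integrableI_nonneg) simp_all
  have "ennreal (\<integral>\<theta>. ratio \<theta> \<partial>density MT (post x)) = ennreal (fbar MT f pi0 x / fbar MT f pr x)"
    using nn_integral_eq_integral[OF int nonneg] nn by simp
  then show "(\<integral>\<theta>. ratio \<theta> \<partial>density MT (post x)) = fbar MT f pi0 x / fbar MT f pr x"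
    using F F0 integral_nonneg_AE[OF nonneg] by (simp add: ennreal_inj)
qed

lemma nn_integral_post_prod_abs_dev_eq:
  assumes x: "x \<in> space MX"
  shows "(\<integral>\<^sup>+ts. ennreal (post_prod x ts * \<bar>1 - c * ratio_mean ts\<bar>) \<partial>MTB)
    = ennreal (1 / real B)
      * (\<integral>\<^sup>+ts. ennreal \<bar>\<Sum>b\<in>{1..B}. c * ratio (ts b) - 1\<bar> \<partial>PiM {1..B} (\<lambda>_. density MT (post x)))"
proof -
  have dev: "\<bar>1 - c * ratio_mean ts\<bar> = \<bar>\<Sum>b\<in>{1..B}. c * ratio (ts b) - 1\<bar> / real B" for ts
  proof -
    have "(\<Sum>b\<in>{1..B}. c * ratio (ts b) - 1) = real B * (c * ratio_mean ts - 1)"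
      using B by (simp add: ratio_mean_def sum_subtractf sum_distrib_left[symmetric] algebra_simps)
    then show ?thesis
      using B by (simp add: abs_minus_commute abs_mult)
  qed
  have "(\<integral>\<^sup>+ts. ennreal (post_prod x ts * \<bar>1 - c * ratio_mean ts\<bar>) \<partial>MTB)
      = (\<integral>\<^sup>+ts. ennreal \<bar>1 - c * ratio_mean ts\<bar> \<partial>post_draws x)"
    using post_prod_nonneg[OF _ x] post_prod_meas_section[OF x]
    by (subst nn_integral_density) (auto simp: ennreal_mult intro!: nn_integral_cong)
  also have "\<dots> = ennreal (1 / real B)
      * (\<integral>\<^sup>+ts. ennreal \<bar>\<Sum>b\<in>{1..B}. c * ratio (ts b) - 1\<bar> \<partial>PiM {1..B} (\<lambda>_. density MT (post x)))"
    unfolding dev PiM_post_eq_density[OF x, symmetric]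
    by (subst nn_integral_cmult[symmetric]) (auto simp: ennreal_mult[symmetric] intro!: nn_integral_cong)
  finally show ?thesis .
qed

text \<open>The central estimate: under the \<open>B\<close>-fold posterior, \<open>sc * ratio_mean\<close> is an average of
  \<open>B\<close> i.i.d. variables of mean \<open>1\<close> and variance \<open>dchi2\<close>, so its mean absolute deviation from \<open>1\<close>
  is at most \<open>sqrt (dchi2 / B)\<close>.\<close>

lemma nn_integral_post_prod_abs_dev_le:
  assumes x: "x \<in> space MX" and F: "0 < fbar MT f pr x" and F0: "0 < fbar MT f pi0 x"
  shows "(\<integral>\<^sup>+ts. ennreal (post_prod x ts * \<bar>1 - fbar MT f pr x / fbar MT f pi0 x * ratio_mean ts\<bar>) \<partial>MTB)
    \<le> esqrt (dchi2 MT (post_dens MT f pi0 x) (post x)) * ennreal (1 / sqrt B)"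
proof -
  define sc where "sc = fbar MT f pr x / fbar MT f pi0 x"
  define D where "D = density MT (post x)"
  define u where "u \<theta> = sc * ratio \<theta> - 1" for \<theta>
  interpret D: prob_space D
    unfolding D_def by (rule prob_space_post[OF x F])
  have u_meas[measurable]: "u \<in> borel_measurable D"
    unfolding u_def D_def by simp
  have lhs: "(\<integral>\<^sup>+ts. ennreal (post_prod x ts * \<bar>1 - sc * ratio_mean ts\<bar>) \<partial>MTB)
      = ennreal (1 / real B) * (\<integral>\<^sup>+ts. ennreal \<bar>\<Sum>b\<in>{1..B}. u (ts b)\<bar> \<partial>PiM {1..B} (\<lambda>_. D))"
    unfolding u_def D_def by (rule nn_integral_post_prod_abs_dev_eq[OF x])
  have chi: "dchi2 MT (post_dens MT f pi0 x) (post x) = (\<integral>\<^sup>+\<theta>. ennreal ((u \<theta>)\<^sup>2) \<partial>D)"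
    unfolding dchi2_post_eq[OF x F F0] u_def sc_def D_def ..
  show ?thesis
  proof (cases "integrable D (\<lambda>\<theta>. (u \<theta>)\<^sup>2)")
    case True
    define V where "V = (\<integral>\<theta>. (u \<theta>)\<^sup>2 \<partial>D)"
    have V: "0 \<le> V" and chi_V: "dchi2 MT (post_dens MT f pi0 x) (post x) = ennreal V"
      unfolding chi V_def using nn_integral_eq_integral[OF True] by simp_all
    have "(\<integral>\<theta>. u \<theta> \<partial>D) = sc * (fbar MT f pi0 x / fbar MT f pr x) - 1"
      using integral_ratio_post[OF x F F0, folded D_def] by (simp add: u_def D.prob_space)
    also have "\<dots> = 0"
      using F F0 by (simp add: sc_def)
    finally have "(\<integral>\<^sup>+ts. ennreal \<bar>\<Sum>b\<in>{1..B}. u (ts b)\<bar> \<partial>PiM {1..B} (\<lambda>_. D)) \<le> ennreal (sqrt (real B * V))"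
      using nn_integral_abs_sum_components_le[OF D.prob_space_axioms finite_atLeastAtMost u_meas True,
          of 1 B]
      by (simp add: V_def)
    then have "(\<integral>\<^sup>+ts. ennreal (post_prod x ts * \<bar>1 - sc * ratio_mean ts\<bar>) \<partial>MTB)
        \<le> ennreal (1 / real B) * ennreal (sqrt (real B * V))"
      unfolding lhs by (rule mult_left_mono) simp
    also have "\<dots> = ennreal (sqrt V) * ennreal (1 / sqrt B)"
    proof -
      have "1 / real B * sqrt (real B * V) = sqrt V * (1 / sqrt B)"
        using B by (simp add: real_sqrt_mult field_simps)
      then show ?thesis
        using V by (simp add: ennreal_mult[symmetric])
    qed
    finally show ?thesis
      using V by (simp add: chi_V esqrt_def sc_def)
  next
    case False
    have "(\<integral>\<^sup>+\<theta>. ennreal ((u \<theta>)\<^sup>2) \<partial>D) = \<infinity>"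
    proof (rule ccontr)
      assume "(\<integral>\<^sup>+\<theta>. ennreal ((u \<theta>)\<^sup>2) \<partial>D) \<noteq> \<infinity>"
      then have "integrable D (\<lambda>\<theta>. (u \<theta>)\<^sup>2)"
        by (intro integrableI_nonneg) (auto simp: less_top)
      with False show False
        by simp
    qed
    then show ?thesis
      using B by (simp add: chi esqrt_def ennreal_mult_eq_top_iff)
  qed
qed

lemma abs_p_q_dens_le:
  assumes x: "x \<in> space MX" and ts: "ts \<in> space MTB"
    and F: "0 < fbar MT f pr x" and F0: "0 < fbar MT f pi0 x"
  shows "\<bar>p_dens x ts - q_dens x ts\<bar>
    \<le> f \<theta>0 x * (post_prod x ts * \<bar>1 - fbar MT f pr x / fbar MT f pi0 x * ratio_mean ts\<bar>)
      + q_dens x ts * (\<bar>f \<theta>0 x - fbar MT f pi0 x\<bar> / fbar MT f pi0 x)"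
proof -
  define a where "a = f \<theta>0 x"
  define F0v where "F0v = fbar MT f pi0 x"
  define h where "h = fbar MT f pr x / F0v * ratio_mean ts"
  have h: "0 \<le> h"
    unfolding h_def F0v_def using F F0 ratio_mean_nonneg[OF ts] by simp
  have "p_dens x ts - q_dens x ts = post_prod x ts * (a * (1 - h) + h * (a - F0v))"
    using F0 by (simp add: p_dens_def q_dens_def a_def h_def F0v_def field_simps)
  also have "\<bar>\<dots>\<bar> \<le> post_prod x ts * (a * \<bar>1 - h\<bar> + h * \<bar>a - F0v\<bar>)"
    using post_prod_nonneg[OF ts x] f_nonneg[OF \<theta>0 x] h
    by (simp add: abs_mult a_def mult_left_mono abs_triangle_ineq[THEN order_trans])
  also have "\<dots> = a * (post_prod x ts * \<bar>1 - h\<bar>) + q_dens x ts * (\<bar>a - F0v\<bar> / F0v)"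
    using F0 by (simp add: q_dens_def h_def F0v_def field_simps)
  finally show ?thesis
    by (simp add: a_def F0v_def h_def)
qed

text \<open>A measurable minorant of the integrand of \<^const>\<open>Delta_err\<close>: the case distinction in
  \<^const>\<open>dchi2\<close> is not visibly measurable in \<open>x\<close>.\<close>

definition chi_post :: "'x \<Rightarrow> ennreal" where
  "chi_post x = (if 0 < fbar MT f pr x
     then esqrt (\<integral>\<^sup>+\<theta>. ennreal ((post_dens MT f pi0 x \<theta> / post x \<theta> - 1)\<^sup>2 * post x \<theta>) \<partial>MT) else 0)"

lemma chi_post_meas[measurable]: "chi_post \<in> borel_measurable MX"
proof -
  interpret sigma_finite_measure MT
    by (rule sfT)
  have [measurable]: "esqrt \<in> borel_measurable borel"
    unfolding esqrt_def[abs_def] by measurable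
  note post_meas[OF pi0_meas, measurable] post_meas[OF pr_meas, measurable]
  show ?thesis
    unfolding chi_post_def[abs_def] by measurable
qed

lemma chi_post_eq:
  assumes F: "0 < fbar MT f pr x"
  shows "chi_post x = esqrt (dchi2 MT (post_dens MT f pi0 x) (post x))"
proof -
  have "AE \<theta> in MT. post x \<theta> = 0 \<longrightarrow> post_dens MT f pi0 x \<theta> = 0"
    using F by (intro AE_I2) (auto simp: post_dens_def dest: pi_pos)
  then show ?thesis
    using F by (simp add: chi_post_def dchi2_def)
qed

lemma chi_post_le: "chi_post x \<le> esqrt (dchi2 MT (post_dens MT f pi0 x) (post x))"
  using chi_post_eq by (cases "0 < fbar MT f pr x") (auto simp: chi_post_def)

lemma nn_integral_abs_p_q_dens_le_of_fbar_pi0_eq_0: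
  assumes x: "x \<in> space MX" and F: "0 < fbar MT f pr x" and F0: "fbar MT f pi0 x = 0"
    and fin0: "fbar_nn pi0 x \<noteq> \<infinity>"
  shows "(\<integral>\<^sup>+ts. ennreal \<bar>p_dens x ts - q_dens x ts\<bar> \<partial>MTB) \<le> ennreal \<bar>f \<theta>0 x - fbar MT f pi0 x\<bar>"
proof -
  have "(\<integral>\<^sup>+ts. ennreal \<bar>p_dens x ts - q_dens x ts\<bar> \<partial>MTB)
      \<le> (\<integral>\<^sup>+ts. ennreal (p_dens x ts) + ennreal (q_dens x ts) \<partial>MTB)"
  proof (intro nn_integral_mono)
    fix ts assume ts: "ts \<in> space MTB"
    then have "\<bar>p_dens x ts - q_dens x ts\<bar> \<le> p_dens x ts + q_dens x ts"
      using p_dens_nonneg[OF x ts] q_dens_nonneg[OF x ts] by simp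
    then show "ennreal \<bar>p_dens x ts - q_dens x ts\<bar> \<le> ennreal (p_dens x ts) + ennreal (q_dens x ts)"
      using p_dens_nonneg[OF x ts] q_dens_nonneg[OF x ts]
      by (simp add: ennreal_plus[symmetric] del: ennreal_plus)
  qed
  also have "\<dots> = ennreal (f \<theta>0 x) * (\<integral>\<^sup>+ts. ennreal (post_prod x ts) \<partial>MTB) + fbar_nn pi0 x"
    using f_nonneg[OF \<theta>0 x] post_prod_meas_section[OF x] measurable_Pair2[OF q_dens_meas x]
    by (simp add: nn_integral_add nn_integral_q_dens_section[OF x F] p_dens_def ennreal_mult'
        nn_integral_cmult)
  also have "\<dots> = ennreal \<bar>f \<theta>0 x - fbar MT f pi0 x\<bar>"
    using F F0 f_nonneg[OF \<theta>0 x] fbar_nn_eq_fbar[OF fin0] by (simp add: nn_integral_post_prod[OF x])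
  finally show ?thesis .
qed

lemma nn_integral_abs_p_q_dens_le_of_pos:
  assumes x: "x \<in> space MX" and F: "0 < fbar MT f pr x" and F0: "0 < fbar MT f pi0 x"
  shows "(\<integral>\<^sup>+ts. ennreal \<bar>p_dens x ts - q_dens x ts\<bar> \<partial>MTB)
    \<le> ennreal \<bar>f \<theta>0 x - fbar MT f pi0 x\<bar> + ennreal (f \<theta>0 x) * chi_post x * ennreal (1 / sqrt B)"
proof -
  define c where "c = \<bar>f \<theta>0 x - fbar MT f pi0 x\<bar> / fbar MT f pi0 x"
  define dev where "dev ts = post_prod x ts * \<bar>1 - fbar MT f pr x / fbar MT f pi0 x * ratio_mean ts\<bar>" for ts
  have [measurable]: "dev \<in> borel_measurable MTB" "(\<lambda>ts. q_dens x ts) \<in> borel_measurable MTB"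
    unfolding dev_def using post_prod_meas_section[OF x] measurable_Pair2[OF q_dens_meas x] by simp_all
  have "(\<integral>\<^sup>+ts. ennreal \<bar>p_dens x ts - q_dens x ts\<bar> \<partial>MTB)
      \<le> (\<integral>\<^sup>+ts. ennreal (f \<theta>0 x) * ennreal (dev ts) + ennreal (q_dens x ts) * ennreal c \<partial>MTB)"
  proof (intro nn_integral_mono)
    fix ts assume ts: "ts \<in> space MTB"
    have "\<bar>p_dens x ts - q_dens x ts\<bar> \<le> f \<theta>0 x * dev ts + q_dens x ts * c"
      using abs_p_q_dens_le[OF x ts F F0] by (simp add: dev_def c_def)
    then have "ennreal \<bar>p_dens x ts - q_dens x ts\<bar> \<le> ennreal (f \<theta>0 x * dev ts + q_dens x ts * c)"
      by (rule ennreal_leI)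
    moreover have "0 \<le> dev ts" "0 \<le> c"
      using post_prod_nonneg[OF ts x] F0 by (simp_all add: dev_def c_def)
    ultimately show "ennreal \<bar>p_dens x ts - q_dens x ts\<bar>
        \<le> ennreal (f \<theta>0 x) * ennreal (dev ts) + ennreal (q_dens x ts) * ennreal c"
      using f_nonneg[OF \<theta>0 x] q_dens_nonneg[OF x ts] by (simp add: ennreal_mult)
  qed
  also have "\<dots> = ennreal (f \<theta>0 x) * (\<integral>\<^sup>+ts. ennreal (dev ts) \<partial>MTB) + fbar_nn pi0 x * ennreal c"
    by (simp add: nn_integral_add nn_integral_cmult nn_integral_multc nn_integral_q_dens_section[OF x F])
  also have "fbar_nn pi0 x * ennreal c = ennreal \<bar>f \<theta>0 x - fbar MT f pi0 x\<bar>"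
    using F0 by (simp add: fbar_nn_eq_fbar_if_pos c_def ennreal_mult[symmetric])
  also have "(\<integral>\<^sup>+ts. ennreal (dev ts) \<partial>MTB) \<le> chi_post x * ennreal (1 / sqrt B)"
    unfolding dev_def chi_post_eq[OF F] by (rule nn_integral_post_prod_abs_dev_le[OF x F F0])
  finally show ?thesis
    by (simp add: add.commute mult_left_mono mult.assoc)
qed

lemma nn_integral_abs_p_q_dens_section_le:
  assumes x: "x \<in> space MX" and fin0: "fbar_nn pi0 x \<noteq> \<infinity>"
  shows "(\<integral>\<^sup>+ts. ennreal \<bar>p_dens x ts - q_dens x ts\<bar> \<partial>MTB)
    \<le> ennreal \<bar>f \<theta>0 x - fbar MT f pi0 x\<bar> + ennreal (f \<theta>0 x) * chi_post x * ennreal (1 / sqrt B)"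
proof -
  consider "fbar MT f pr x = 0" | "0 < fbar MT f pr x" "fbar MT f pi0 x = 0"
    | "0 < fbar MT f pr x" "0 < fbar MT f pi0 x"
    using fbar_nonneg[of MT f pr x] fbar_nonneg[of MT f pi0 x] by linarith
  then show ?thesis
  proof cases
    case 1
    then show ?thesis
      by (simp add: p_dens_eq_0 q_dens_eq_0)
  next
    case 2
    then show ?thesis
      using nn_integral_abs_p_q_dens_le_of_fbar_pi0_eq_0[OF x _ _ fin0] by (meson add_increasing2 zero_le)
  next
    case 3
    then show ?thesis
      by (rule nn_integral_abs_p_q_dens_le_of_pos[OF x])
  qed
qed

lemma nn_integral_abs_p_q_dens_le:
  "(\<integral>\<^sup>+x. \<integral>\<^sup>+ts. ennreal \<bar>p_dens x ts - q_dens x ts\<bar> \<partial>MTB \<partial>MX)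
    \<le> 2 * ennreal (eps_err MX MT f \<theta>0 pi0) + Delta_err MX MT f pr \<theta>0 pi0 * ennreal (1 / sqrt B)"
proof -
  have "AE x in MX. (\<integral>\<^sup>+ts. ennreal \<bar>p_dens x ts - q_dens x ts\<bar> \<partial>MTB)
      \<le> ennreal \<bar>f \<theta>0 x - fbar MT f pi0 x\<bar> + ennreal (f \<theta>0 x) * chi_post x * ennreal (1 / sqrt B)"
    using AE_space AE_fbar_nn_finite[OF pi0_dens] by eventually_elim (rule nn_integral_abs_p_q_dens_section_le)
  then have "(\<integral>\<^sup>+x. \<integral>\<^sup>+ts. ennreal \<bar>p_dens x ts - q_dens x ts\<bar> \<partial>MTB \<partial>MX)
      \<le> (\<integral>\<^sup>+x. ennreal \<bar>f \<theta>0 x - fbar MT f pi0 x\<bar> + ennreal (f \<theta>0 x) * chi_post x * ennreal (1 / sqrt B) \<partial>MX)"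
    by (rule nn_integral_mono_AE)
  also have "\<dots> = (\<integral>\<^sup>+x. ennreal \<bar>f \<theta>0 x - fbar MT f pi0 x\<bar> \<partial>MX)
      + (\<integral>\<^sup>+x. chi_post x \<partial>density MX (f \<theta>0)) * ennreal (1 / sqrt B)"
    by (simp add: nn_integral_add nn_integral_multc nn_integral_density)
  also have "\<dots> \<le> 2 * ennreal (eps_err MX MT f \<theta>0 pi0) + Delta_err MX MT f pr \<theta>0 pi0 * ennreal (1 / sqrt B)"
  proof (intro add_mono mult_right_mono)
    show "(\<integral>\<^sup>+x. ennreal \<bar>f \<theta>0 x - fbar MT f pi0 x\<bar> \<partial>MX) \<le> 2 * ennreal (eps_err MX MT f \<theta>0 pi0)"
      unfolding eps_err_def using f_nonneg[OF \<theta>0] fbar_nonneg f_dens[OF \<theta>0] nn_integral_fbar[OF pi0_dens]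
      by (intro nn_integral_abs_diff_le_dTV) auto
    show "(\<integral>\<^sup>+x. chi_post x \<partial>density MX (f \<theta>0)) \<le> Delta_err MX MT f pr \<theta>0 pi0"
      unfolding Delta_err_def by (intro nn_integral_mono) (simp add: chi_post_le)
  qed simp
  finally show ?thesis .
qed

lemma dTV_L_E_le:
  "2 * ennreal (dTV L E)
    \<le> 2 * ennreal (eps_err MX MT f \<theta>0 pi0) + Delta_err MX MT f pr \<theta>0 pi0 * ennreal (1 / sqrt B)"
proof -
  have pair: "(\<integral>\<^sup>+x. \<integral>\<^sup>+ts. g (x, ts) \<partial>MTB \<partial>MX) = (\<integral>\<^sup>+z. g z \<partial>(MX \<Otimes>\<^sub>M MTB))"
    if "g \<in> borel_measurable (MX \<Otimes>\<^sub>M MTB)" for g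
    using sigma_finite_measure.nn_integral_fst[OF sigma_finite_MTB that] .
  have "2 * ennreal (dTV L E)
      \<le> (\<integral>\<^sup>+z. ennreal \<bar>case_prod p_dens z - case_prod q_dens z\<bar> \<partial>(MX \<Otimes>\<^sub>M MTB))"
  proof (rule dTV_le_common_kernel[where k = "\<lambda>A. case_prod (resample_prob A)"])
    show "case_prod p_dens \<in> borel_measurable (MX \<Otimes>\<^sub>M MTB)" "case_prod q_dens \<in> borel_measurable (MX \<Otimes>\<^sub>M MTB)"
      by measurable
    show "0 \<le> case_prod p_dens z" "0 \<le> case_prod q_dens z" if "z \<in> space (MX \<Otimes>\<^sub>M MTB)" for z
      using that p_dens_nonneg q_dens_nonneg by (auto simp: space_pair_measure)
    show "(\<integral>\<^sup>+z. ennreal (case_prod p_dens z) \<partial>(MX \<Otimes>\<^sub>M MTB)) = 1"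
      using nn_integral_p_dens pair[of "\<lambda>z. ennreal (case_prod p_dens z)"] by simp
    show "(\<integral>\<^sup>+z. ennreal (case_prod q_dens z) \<partial>(MX \<Otimes>\<^sub>M MTB)) = 1"
      using nn_integral_q_dens pair[of "\<lambda>z. ennreal (case_prod q_dens z)"] by simp
    fix A assume "A \<in> sets L"
    then have A: "A \<in> sets MX0M"
      by (simp add: sets_L)
    show "case_prod (resample_prob A) \<in> borel_measurable (MX \<Otimes>\<^sub>M MTB)"
      using resample_prob_meas[OF A] by (simp add: case_prod_beta')
    show "case_prod (resample_prob A) z \<le> 1" if "z \<in> space (MX \<Otimes>\<^sub>M MTB)" for z
      using that resample_prob_le_1 by (auto simp: space_pair_measure)
    show "emeasure L A = (\<integral>\<^sup>+z. ennreal (case_prod p_dens z) * case_prod (resample_prob A) z \<partial>(MX \<Otimes>\<^sub>M MTB))"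
      using emeasure_L[OF A] pair[of "\<lambda>z. ennreal (case_prod p_dens z) * case_prod (resample_prob A) z"]
        resample_prob_meas[OF A] by (simp add: case_prod_beta')
    show "emeasure E A = (\<integral>\<^sup>+z. ennreal (case_prod q_dens z) * case_prod (resample_prob A) z \<partial>(MX \<Otimes>\<^sub>M MTB))"
      using emeasure_E[OF A] pair[of "\<lambda>z. ennreal (case_prod q_dens z) * case_prod (resample_prob A) z"]
        resample_prob_meas[OF A] by (simp add: case_prod_beta')
  qed
  also have "\<dots> = (\<integral>\<^sup>+x. \<integral>\<^sup>+ts. ennreal \<bar>p_dens x ts - q_dens x ts\<bar> \<partial>MTB \<partial>MX)"
    using pair[of "\<lambda>z. ennreal \<bar>case_prod p_dens z - case_prod q_dens z\<bar>"] by simp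
  also have "\<dots> \<le> 2 * ennreal (eps_err MX MT f \<theta>0 pi0) + Delta_err MX MT f pr \<theta>0 pi0 * ennreal (1 / sqrt B)"
    by (rule nn_integral_abs_p_q_dens_le)
  finally show ?thesis .
qed

lemma d_exch_L_le:
  "ennreal (d_exch MX M L)
    \<le> ennreal (eps_err MX MT f \<theta>0 pi0) + Delta_err MX MT f pr \<theta>0 pi0 / ennreal (2 * sqrt (real B))"
proof -
  define e where "e = ennreal (eps_err MX MT f \<theta>0 pi0)"
  define \<Delta> where "\<Delta> = Delta_err MX MT f pr \<theta>0 pi0"
  have sqrt_B: "0 < sqrt (real B)"
    using B by simp
  define k where "k = ennreal (1 / (2 * sqrt (real B)))"
  have "ennreal 2 * k = ennreal (2 * (1 / (2 * sqrt (real B))))"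
    unfolding k_def using sqrt_B by (intro ennreal_mult[symmetric]) auto
  then have "\<Delta> * ennreal (1 / sqrt (real B)) = 2 * (\<Delta> * k)"
    using sqrt_B by (simp add: mult.left_commute)
  also have "\<Delta> * k = \<Delta> / ennreal (2 * sqrt (real B))"
    unfolding k_def using sqrt_B by (simp add: divide_ennreal_def inverse_ennreal inverse_eq_divide)
  finally have "\<Delta> * ennreal (1 / sqrt (real B)) = 2 * (\<Delta> / ennreal (2 * sqrt (real B)))" .
  then have "2 * ennreal (dTV L E) \<le> 2 * (e + \<Delta> / ennreal (2 * sqrt (real B)))"
    using dTV_L_E_le by (simp add: e_def \<Delta>_def distrib_left)
  then have "ennreal (dTV L E) \<le> e + \<Delta> / ennreal (2 * sqrt (real B))"
    by (subst (asm) ennreal_mult_le_mult_iff) auto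
  moreover have "d_exch MX M L \<le> dTV L E"
    using prob_space_L prob_space_E sets_E exchangeable_E
    by (intro d_exch_le_dTV) (auto intro: prob_space.finite_measure)
  ultimately show ?thesis
    unfolding e_def \<Delta>_def by (meson ennreal_leI order_trans)
qed

end

theorem theorem2:
  fixes MX :: "'x measure" and MT :: "'t measure"
    and f :: "'t \<Rightarrow> 'x \<Rightarrow> real" and pr :: "'t \<Rightarrow> real"
    and B M :: nat and \<theta>0 :: 't
    and Q :: "'x \<Rightarrow> (nat \<Rightarrow> 't) \<Rightarrow> (nat \<Rightarrow> 'x) measure"
  assumes sfX: "sigma_finite_measure MX" and sfT: "sigma_finite_measure MT"
    and f_meas: "(\<lambda>(\<theta>, x). f \<theta> x) \<in> borel_measurable (MT \<Otimes>\<^sub>M MX)"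
    and f_nonneg: "\<And>\<theta> x. \<theta> \<in> space MT \<Longrightarrow> x \<in> space MX \<Longrightarrow> 0 \<le> f \<theta> x"
    and f_dens: "\<And>\<theta>. \<theta> \<in> space MT \<Longrightarrow> (\<integral>\<^sup>+ x. ennreal (f \<theta> x) \<partial>MX) = 1"
    and pi_dens: "is_density MT pr"
    and pi_pos: "\<And>\<theta>. \<theta> \<in> space MT \<Longrightarrow> 0 < pr \<theta>"
    and pi_supp: "supp_cover MX MT f pr"
    and B: "1 \<le> B" and M: "1 \<le> M"
    and Q_kernel: "(\<lambda>(x, ts). Q x ts) \<in> MX \<Otimes>\<^sub>M PiM {1..B} (\<lambda>_. MT)
                      \<rightarrow>\<^sub>M prob_algebra (PiM {1..M} (\<lambda>_. MX))"
    and Q_exch: "\<And>ts. ts \<in> space (PiM {1..B} (\<lambda>_. MT)) \<Longrightarrow>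
        0 < g_const MX MT f pr B ts \<Longrightarrow> g_const MX MT f pr B ts < \<infinity> \<Longrightarrow>
        exchangeable {0..M}
          (joint_law MX M (density MX (g_dens MX MT f pr B ts)) (\<lambda>x. Q x ts))"
    and \<theta>0: "\<theta>0 \<in> space MT"
  shows "ennreal (d_exch MX M
            (joint_law MX M (density MX (f \<theta>0))
               (\<lambda>x. PiM {1..B} (\<lambda>_. density MT (post_dens MT f pr x)) \<bind> (\<lambda>ts. Q x ts))))
         \<le> (INF pi0\<in>{pi0. is_density MT pi0 \<and> supp_cover MX MT f pi0}.
               ennreal (eps_err MX MT f \<theta>0 pi0)
               + Delta_err MX MT f pr \<theta>0 pi0 / ennreal (2 * sqrt (real B)))"
proof -
  interpret posterior_resampling MX MT f pr B M \<theta>0 Q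
    by (rule posterior_resampling.intro)
      (fact sfX sfT f_meas f_nonneg f_dens pi_dens pi_pos pi_supp B Q_kernel Q_exch \<theta>0)+
  show ?thesis
  proof (rule INF_greatest)
    fix pi0 assume "pi0 \<in> {pi0. is_density MT pi0 \<and> supp_cover MX MT f pi0}"
    then interpret posterior_resampling_ref MX MT f pr B M \<theta>0 Q pi0
      by unfold_locales auto
    show "ennreal (d_exch MX M L)
        \<le> ennreal (eps_err MX MT f \<theta>0 pi0) + Delta_err MX MT f pr \<theta>0 pi0 / ennreal (2 * sqrt (real B))"
      by (rule d_exch_L_le)
  qed
qed

end
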